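(* Let $\mathbb K$ be a field and $\mathbb K\mathrm{IRel}=\bigoplus_{n\ge0}\mathbb K\mathrm{IRel}_n$ with basis $(\mathbb F_R)$ indexed by integer relations $R$ of all sizes (including the empty relation of size $0$). The product $\mathbb F_R\cdot\mathbb F_S=\sum_{T\in R\,\bar\sqcup\, S}\mathbb F_T$ and the coproduct $\Delta(\mathbb F_R)=\sum_{(X,Y)}\mathbb F_{\mathrm{std}(R|_X)}\otimes\mathbb F_{\mathrm{std}(R|_Y)}$, the sum over all total cuts $(X,Y)$ of $R$, endow $\mathbb K\mathrm{IRel}$ with the structure of a graded (by size) Hopf algebra with unit $\mathbb F_\varnothing$.
   Context: An integer relation of size $n$ is a reflexive binary relation on $[n]$; $\mathrm{IRel}_n$ denotes the set of them. For $R$ of size $n$ and $S$ of size $m$, the shifted shuffle $R\,\bar\sqcup\,S$ is the set of all integer relations $T$ of size $n+m$ whose restriction to $\{1,\dots,n\}$ equals $R$ and whose restriction to $\{n+1,\dots,n+m\}$ equals the shift $\bar S=\{(i+n,j+n):(i,j)\in S\}$ (relations between an element of $[n]$ and an element of $\{n+1,\dots,n+m\}$, in either direction, are arbitrary). A total cut of $R$ is an ordered pair $(X,Y)$ of disjoint sets with $X\cup Y=[n]$ such that for all $x\in X$, $y\in Y$: $(x,y)\in R$ and $(y,x)\notin R$ (including $X=\varnothing$ or $Y=\varnothing$). $R|_X$ is the restriction of $R$ to $X$, and $\mathrm{std}$ relabels the ground set order-preservingly by $1,\dots,|X|$. *)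

theory Defs
  imports Main
begin

text \<open>An integer relation of size n is encoded as a pair (n, R) with R a reflexive
  relation on {1..n}.\<close>

type_synonym irel = "nat \<times> (nat \<times> nat) set"

definition IRel :: "nat \<Rightarrow> irel set" where
  "IRel n = {(n, R) | R. R \<subseteq> {1..n} \<times> {1..n} \<and> (\<forall>i\<in>{1..n}. (i, i) \<in> R)}"

definition irels :: "irel set" where
  "irels = (\<Union>n. IRel n)"

definition empty_irel :: irel where
  "empty_irel = (0, {})"

definition shsh :: "irel \<Rightarrow> irel \<Rightarrow> irel set" where
  "shsh RR SS = (case RR of (n, R) \<Rightarrow> case SS of (m, S) \<Rightarrow>
     {(n + m, T) | T. (n + m, T) \<in> IRel (n + m)
        \<and> T \<inter> ({1..n} \<times> {1..n}) = R
        \<and> T \<inter> ({n+1..n+m} \<times> {n+1..n+m}) = (\<lambda>(i, j). (i + n, j + n)) ` S})"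

definition total_cut :: "irel \<Rightarrow> nat set \<Rightarrow> nat set \<Rightarrow> bool" where
  "total_cut RR X Y \<longleftrightarrow> X \<inter> Y = {} \<and> X \<union> Y = {1..fst RR}
     \<and> (\<forall>x\<in>X. \<forall>y\<in>Y. (x, y) \<in> snd RR \<and> (y, x) \<notin> snd RR)"

text \<open>std(R|_X): restrict to X and relabel order-preservingly by 1..|X|.\<close>
definition std_restr :: "irel \<Rightarrow> nat set \<Rightarrow> irel" where
  "std_restr RR X = (card X,
     {(i, j). 1 \<le> i \<and> i \<le> card X \<and> 1 \<le> j \<and> j \<le> card X \<and>
        (sorted_list_of_set X ! (i - 1), sorted_list_of_set X ! (j - 1)) \<in> snd RR})"

text \<open>Finitely supported functions (vectors with respect to a basis).\<close>
definition fsupp :: "('a \<Rightarrow> 'k::zero) \<Rightarrow> 'a set" where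
  "fsupp a = {x. a x \<noteq> 0}"

definition fs_on :: "'a set \<Rightarrow> ('a \<Rightarrow> 'k::zero) set" where
  "fs_on A = {a. finite (fsupp a) \<and> fsupp a \<subseteq> A}"

definition bas :: "'a \<Rightarrow> 'a \<Rightarrow> 'k::{zero,one}" where
  "bas x = (\<lambda>y. if y = x then 1 else 0)"

text \<open>Linear extension of a map given on basis elements (by its matrix f).\<close>
definition lin :: "('a \<Rightarrow> 'b \<Rightarrow> 'k::comm_semiring_1) \<Rightarrow> ('a \<Rightarrow> 'k) \<Rightarrow> 'b \<Rightarrow> 'k" where
  "lin f a = (\<lambda>y. \<Sum>x\<in>fsupp a. a x * f x y)"

definition mult_basis :: "irel \<Rightarrow> irel \<Rightarrow> irel \<Rightarrow> 'k::{zero,one}" where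
  "mult_basis R S = (\<lambda>T. if T \<in> shsh R S then 1 else 0)"

definition mult :: "(irel \<Rightarrow> 'k::comm_semiring_1) \<Rightarrow> (irel \<Rightarrow> 'k) \<Rightarrow> irel \<Rightarrow> 'k" where
  "mult a b = lin (\<lambda>R. lin (\<lambda>S. mult_basis R S) b) a"

text \<open>Coproduct on basis: sum over total cuts; tensors F_U (x) F_V are encoded as pairs (U,V).\<close>
definition cop_basis :: "irel \<Rightarrow> irel \<times> irel \<Rightarrow> 'k::comm_semiring_1" where
  "cop_basis R = (\<lambda>(U, V). of_nat (card {(X, Y). total_cut R X Y
        \<and> std_restr R X = U \<and> std_restr R Y = V}))"

definition cop :: "(irel \<Rightarrow> 'k::comm_semiring_1) \<Rightarrow> irel \<times> irel \<Rightarrow> 'k" where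
  "cop a = lin cop_basis a"

text \<open>(Delta (x) id) and (id (x) Delta) on the tensor square, with values in the
  triple tensor product (basis indexed by triples).\<close>
definition cop_l :: "(irel \<times> irel \<Rightarrow> 'k::comm_semiring_1) \<Rightarrow> irel \<times> irel \<times> irel \<Rightarrow> 'k" where
  "cop_l t = lin (\<lambda>(P, Q) (U, V, W). cop_basis P (U, V) * bas Q W) t"

definition cop_r :: "(irel \<times> irel \<Rightarrow> 'k::comm_semiring_1) \<Rightarrow> irel \<times> irel \<times> irel \<Rightarrow> 'k" where
  "cop_r t = lin (\<lambda>(P, Q) (U, V, W). bas P U * cop_basis Q (V, W)) t"

definition mult2 :: "(irel \<times> irel \<Rightarrow> 'k::comm_semiring_1) \<Rightarrow> (irel \<times> irel \<Rightarrow> 'k) \<Rightarrow> irel \<times> irel \<Rightarrow> 'k" where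
  "mult2 t t' = lin (\<lambda>(P, Q). lin (\<lambda>(P', Q') (U, V).
       mult_basis P P' U * mult_basis Q Q' V) t') t"

end

theory Submission
  imports Defs
begin

text \<open>Product and coproduct are defined on basis elements and extended linearly, so each axiom
  becomes an identity between finite sums, proved by a bijection of index sets. Standardization
  commutes with restriction, and in both associativity and coassociativity the two bracketings
  enumerate the same triples: shuffles of three relations, resp. cuts of a relation into three
  consecutive blocks. A relation with a total cut \<open>(X, Y)\<close> is determined by its standardized
  restrictions to \<open>X\<close> and \<open>Y\<close> (it is "glued" from them), which yields a bijection between pairs
  (shuffle \<open>T\<close> of \<open>R\<close> and \<open>S\<close>, cut of \<open>T\<close>) and tuples (cut of \<open>R\<close>, cut of \<open>S\<close>, shuffles of the
  parts); this is the compatibility \<open>\<Delta>(x y) = \<Delta>(x) \<Delta>(y)\<close>. The counit is evaluation at the empty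
  relation. As the algebra is graded and connected, left and right antipodes exist by Takeuchi's
  recursion on the size, and they agree by associativity of convolution.\<close>

section \<open>Finitely supported functions and linear extension\<close>

lemma fsupp_bas [simp]: "fsupp (bas x :: 'a \<Rightarrow> 'k::zero_neq_one) = {x}"
  by (auto simp: fsupp_def bas_def)

lemma lin_bas [simp]: "lin f (bas x) = f x"
  by (auto simp: lin_def bas_def fsupp_def)

lemma lin_eq_sum_superset:
  assumes "finite A" "fsupp a \<subseteq> A"
  shows "lin f a = (\<lambda>y. \<Sum>x\<in>A. a x * f x y)"
  unfolding lin_def by (intro ext sum.mono_neutral_left[OF assms]) (auto simp: fsupp_def)

lemma lin_bas_self:
  assumes "finite (fsupp a)"
  shows "lin bas a = a"
proof
  fix y
  have "lin bas a y = (\<Sum>x\<in>fsupp a. if y = x then a x else 0)"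
    unfolding lin_def bas_def by (rule sum.cong) auto
  also have "\<dots> = (if y \<in> fsupp a then a y else 0)"
    by (rule sum.delta'[OF assms])
  also have "\<dots> = a y"
    by (simp add: fsupp_def)
  finally show "lin bas a y = a y" .
qed

lemma fsupp_sum_subset: "fsupp (\<lambda>z. \<Sum>i\<in>I. g i z) \<subseteq> (\<Union>i\<in>I. fsupp (g i))"
proof
  fix z assume "z \<in> fsupp (\<lambda>z. \<Sum>i\<in>I. g i z)"
  then obtain i where "i \<in> I" "g i z \<noteq> 0"
    unfolding fsupp_def by (auto elim: sum.not_neutral_contains_not_neutral)
  then show "z \<in> (\<Union>i\<in>I. fsupp (g i))" by (auto simp: fsupp_def)
qed

lemma fsupp_lin_subset: "fsupp (lin f a) \<subseteq> (\<Union>x\<in>fsupp a. fsupp (f x))"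
proof
  fix y assume "y \<in> fsupp (lin f a)"
  then obtain x where "x \<in> fsupp a" "a x * f x y \<noteq> 0"
    unfolding fsupp_def lin_def by (auto elim: sum.not_neutral_contains_not_neutral)
  then show "y \<in> (\<Union>x\<in>fsupp a. fsupp (f x))" by (auto simp: fsupp_def)
qed

lemma fs_on_finite: "a \<in> fs_on A \<Longrightarrow> finite (fsupp a)"
  unfolding fs_on_def by simp

lemma fs_on_subset: "a \<in> fs_on A \<Longrightarrow> x \<in> fsupp a \<Longrightarrow> x \<in> A"
  unfolding fs_on_def by auto

lemma bas_in_fs_on: "x \<in> A \<Longrightarrow> (bas x :: 'a \<Rightarrow> 'k::zero_neq_one) \<in> fs_on A"
  unfolding fs_on_def by simp

lemma uminus_in_fs_on: "f \<in> fs_on A \<Longrightarrow> (\<lambda>x. - f x :: 'k::ab_group_add) \<in> fs_on A"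
  unfolding fs_on_def fsupp_def by simp

lemma fs_on_UN:
  assumes "finite I" "\<And>i. i \<in> I \<Longrightarrow> g i \<in> fs_on A" "fsupp b \<subseteq> (\<Union>i\<in>I. fsupp (g i))"
  shows "b \<in> fs_on A"
proof -
  have "finite (\<Union>i\<in>I. fsupp (g i))" "(\<Union>i\<in>I. fsupp (g i)) \<subseteq> A"
    using assms(1,2) by (auto simp: fs_on_def)
  then show ?thesis
    using assms(3) unfolding fs_on_def by (auto intro: finite_subset)
qed

lemma lin_in_fs_on:
  "finite (fsupp a) \<Longrightarrow> (\<And>x. x \<in> fsupp a \<Longrightarrow> f x \<in> fs_on B) \<Longrightarrow> lin f a \<in> fs_on B"
  by (rule fs_on_UN[OF _ _ fsupp_lin_subset])

lemma sum_in_fs_on: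
  "finite I \<Longrightarrow> (\<And>i. i \<in> I \<Longrightarrow> g i \<in> fs_on A) \<Longrightarrow> (\<lambda>z. \<Sum>i\<in>I. g i z) \<in> fs_on A"
  by (rule fs_on_UN[OF _ _ fsupp_sum_subset])

lemma lin_cong: "(\<And>x. x \<in> fsupp a \<Longrightarrow> f x = g x) \<Longrightarrow> lin f a = lin g a"
  unfolding lin_def by auto

lemma lin_lin:
  assumes "finite (fsupp a)" "\<And>x. x \<in> fsupp a \<Longrightarrow> finite (fsupp (g x))"
  shows "lin f (lin g a) = lin (\<lambda>x. lin f (g x)) a"
proof
  fix z
  define B where "B = (\<Union>x\<in>fsupp a. fsupp (g x))"
  have B: "finite B" "\<And>x. x \<in> fsupp a \<Longrightarrow> fsupp (g x) \<subseteq> B"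
    using assms by (auto simp: B_def)
  have "lin f (lin g a) z = (\<Sum>y\<in>B. \<Sum>x\<in>fsupp a. a x * g x y * f y z)"
    using lin_eq_sum_superset[OF B(1), of "lin g a" f] fsupp_lin_subset[of g a]
    by (simp add: B_def lin_def sum_distrib_right)
  also have "\<dots> = (\<Sum>x\<in>fsupp a. a x * (\<Sum>y\<in>B. g x y * f y z))"
    by (subst sum.swap) (simp add: sum_distrib_left mult.assoc)
  also have "\<dots> = (\<Sum>x\<in>fsupp a. a x * lin f (g x) z)"
    using lin_eq_sum_superset[OF B(1) B(2), of _ f] by (intro sum.cong) auto
  also have "\<dots> = lin (\<lambda>x. lin f (g x)) a z"
    by (simp add: lin_def)
  finally show "lin f (lin g a) z = lin (\<lambda>x. lin f (g x)) a z" .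
qed

lemma lin_commute: "lin (\<lambda>x. lin (g x) b) a = lin (\<lambda>y. lin (\<lambda>x. g x y) a) b"
  unfolding lin_def by (intro ext) (simp add: sum_distrib_left mult_ac, rule sum.swap)

lemma lin_sum_kernel: "lin (\<lambda>x y. \<Sum>i\<in>I. G i x y) a = (\<lambda>y. \<Sum>i\<in>I. lin (G i) a y)"
  unfolding lin_def by (intro ext) (simp add: sum_distrib_left, rule sum.swap)

lemma lin_sum:
  fixes g :: "'i \<Rightarrow> 'a \<Rightarrow> 'k::comm_semiring_1"
  assumes "finite I" "\<And>i. i \<in> I \<Longrightarrow> finite (fsupp (g i))"
  shows "lin F (\<lambda>z. \<Sum>i\<in>I. g i z) = (\<lambda>y. \<Sum>i\<in>I. lin F (g i) y)"
proof
  fix y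
  define B where "B = (\<Union>i\<in>I. fsupp (g i))"
  have B: "finite B" "\<And>i. i \<in> I \<Longrightarrow> fsupp (g i) \<subseteq> B"
    using assms by (auto simp: B_def)
  have "lin F (\<lambda>z. \<Sum>i\<in>I. g i z) y = (\<Sum>i\<in>I. \<Sum>z\<in>B. g i z * F z y)"
    using lin_eq_sum_superset[OF B(1) fsupp_sum_subset[of g I, folded B_def], of F]
    by (simp add: sum_distrib_right) (rule sum.swap)
  also have "\<dots> = (\<Sum>i\<in>I. lin F (g i) y)"
    using lin_eq_sum_superset[OF B(1) B(2), of _ F] by (auto intro!: sum.cong)
  finally show "lin F (\<lambda>z. \<Sum>i\<in>I. g i z) y = (\<Sum>i\<in>I. lin F (g i) y)" .
qed

lemma lin_indicator:
  "finite B \<Longrightarrow> lin F (\<lambda>z. if z \<in> B then 1 else 0) = (\<lambda>y. \<Sum>x\<in>B. F x y)"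
  using lin_eq_sum_superset[of B "\<lambda>z. if z \<in> B then 1 else 0" F]
  by (simp add: fsupp_def subset_iff)

lemma fsupp_of_nat_card_subset:
  "fsupp (\<lambda>z. of_nat (card {c\<in>C. h c = z}) :: 'k::comm_semiring_1) \<subseteq> h ` C"
proof
  fix z assume "z \<in> fsupp (\<lambda>z. of_nat (card {c\<in>C. h c = z}) :: 'k)"
  then have "card {c\<in>C. h c = z} \<noteq> 0"
    unfolding fsupp_def by (metis (mono_tags) mem_Collect_eq of_nat_0)
  then obtain c where "c \<in> C" "h c = z" by (metis (mono_tags, lifting) Collect_empty_eq card.empty)
  then show "z \<in> h ` C" by blast
qed

lemma lin_of_nat_card:
  fixes F :: "'a \<Rightarrow> 'b \<Rightarrow> 'k::comm_semiring_1"
  assumes "finite C"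
  shows "lin F (\<lambda>z. of_nat (card {c\<in>C. h c = z})) = (\<lambda>y. \<Sum>c\<in>C. F (h c) y)"
proof
  fix y
  have "lin F (\<lambda>z. of_nat (card {c\<in>C. h c = z})) = (\<lambda>y. \<Sum>z\<in>h ` C. of_nat (card {c\<in>C. h c = z}) * F z y)"
    by (rule lin_eq_sum_superset) (simp_all add: assms fsupp_of_nat_card_subset)
  then have "lin F (\<lambda>z. of_nat (card {c\<in>C. h c = z})) y
      = (\<Sum>z\<in>h ` C. \<Sum>c\<in>{c\<in>C. h c = z}. F (h c) y)"
    by simp
  also have "\<dots> = (\<Sum>c\<in>C. F (h c) y)"
    by (rule sum.group) (use assms in auto)
  finally show "lin F (\<lambda>z. of_nat (card {c\<in>C. h c = z})) y = (\<Sum>c\<in>C. F (h c) y)" .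
qed

lemma lin_zero: "lin F (\<lambda>_. 0) = (\<lambda>_. 0)"
  unfolding lin_def fsupp_def by simp

lemma lin_zero_kernel: "lin (\<lambda>_ _. 0) a = (\<lambda>_. 0)"
  unfolding lin_def by simp

lemma lin_delta_kernel:
  assumes "finite (fsupp a)"
  shows "lin (\<lambda>x. if x = x0 then g else (\<lambda>_. 0)) a = (\<lambda>y. a x0 * g y)"
proof
  fix y
  have "lin (\<lambda>x. if x = x0 then g else (\<lambda>_. 0)) a y = (\<Sum>x\<in>fsupp a. if x = x0 then a x * g y else 0)"
    unfolding lin_def by (rule sum.cong) auto
  also have "\<dots> = (if x0 \<in> fsupp a then a x0 * g y else 0)"
    by (rule sum.delta[OF assms])
  also have "\<dots> = a x0 * g y"
    by (simp add: fsupp_def)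
  finally show "lin (\<lambda>x. if x = x0 then g else (\<lambda>_. 0)) a y = a x0 * g y" .
qed

lemma sum_times_bas:
  fixes a :: "'a \<Rightarrow> 'k::comm_semiring_1"
  assumes "finite (fsupp a)"
  shows "(\<Sum>x\<in>fsupp a. a x * bas x0 x) = a x0"
proof -
  have "(\<Sum>x\<in>fsupp a. a x * bas x0 x) = (\<Sum>x\<in>fsupp a. if x = x0 then a x else 0)"
    by (rule sum.cong) (auto simp: bas_def)
  also have "\<dots> = (if x0 \<in> fsupp a then a x0 else 0)"
    by (rule sum.delta[OF assms])
  finally show ?thesis
    by (simp add: fsupp_def)
qed

section \<open>Standardization\<close>

text \<open>The \<open>i\<close>-th smallest element of \<open>X\<close>; indices start at \<open>1\<close>, as in \<open>std_restr\<close>.\<close>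

definition nth_elem :: "nat set \<Rightarrow> nat \<Rightarrow> nat" where
  "nth_elem X i = sorted_list_of_set X ! (i - 1)"

lemma strict_mono_on_nth_elem:
  assumes "finite X"
  shows "strict_mono_on {1..card X} (nth_elem X)"
proof (rule strict_mono_onI)
  fix i j assume "i \<in> {1..card X}" "j \<in> {1..card X}" "i < j"
  moreover have "sorted_wrt (<) (sorted_list_of_set X)" using assms by simp
  ultimately show "nth_elem X i < nth_elem X j"
    using assms by (auto simp: nth_elem_def sorted_wrt_iff_nth_less)
qed

lemma nth_elem_image:
  assumes "finite X"
  shows "nth_elem X ` {1..card X} = X"
proof -
  let ?xs = "sorted_list_of_set X"
  have "nth_elem X ` {1..card X} = (!) ?xs ` ((\<lambda>i. i - 1) ` {1..card X})"
    by (auto simp: nth_elem_def image_iff)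
  also have "(\<lambda>i. i - 1) ` {1..card X} = {0..<length ?xs}"
    using assms by (auto simp: image_iff intro!: bexI[where x = "Suc _"])
  also have "(!) ?xs ` {0..<length ?xs} = X"
    using assms by (simp add: nth_image)
  finally show ?thesis .
qed

lemma nth_elem_in: "finite X \<Longrightarrow> i \<in> {1..card X} \<Longrightarrow> nth_elem X i \<in> X"
  using nth_elem_image by blast

lemma bij_betw_nth_elem: "finite X \<Longrightarrow> bij_betw (nth_elem X) {1..card X} X"
  unfolding bij_betw_def
  using strict_mono_on_imp_inj_on[OF strict_mono_on_nth_elem] nth_elem_image by blast

lemma nth_elem_unique:
  assumes mono: "strict_mono_on {1..k} f" and img: "f ` {1..k} = X"
  shows "card X = k" and "i \<in> {1..k} \<Longrightarrow> nth_elem X i = f i"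
proof -
  have "card X = card {1..k}"
    unfolding img[symmetric] by (rule card_image[OF strict_mono_on_imp_inj_on[OF mono]])
  then show card: "card X = k" by simp
  let ?l = "map f [1..<k+1]"
  have "sorted_wrt (<) ?l"
    unfolding sorted_wrt_map
    by (rule sorted_wrt_mono_rel[OF _ sorted_wrt_upt]) (auto intro: strict_mono_onD[OF mono])
  moreover have "set ?l = X" "length ?l = card X"
    using img card by (auto simp: atLeastLessThanSuc_atLeastAtMost)
  ultimately have "sorted_list_of_set X = ?l"
    using sorted_list_of_set_unique[of X] img by blast
  then show "i \<in> {1..k} \<Longrightarrow> nth_elem X i = f i"
    by (auto simp: nth_elem_def nth_map_upt simp del: upt_Suc)
qed

definition pull_rel :: "nat \<Rightarrow> (nat \<Rightarrow> nat) \<Rightarrow> (nat \<times> nat) set \<Rightarrow> (nat \<times> nat) set" where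
  "pull_rel k f R = {(i, j). i \<in> {1..k} \<and> j \<in> {1..k} \<and> (f i, f j) \<in> R}"

lemma std_restr_eq_pull_rel: "std_restr R X = (card X, pull_rel (card X) (nth_elem X) (snd R))"
  unfolding std_restr_def pull_rel_def nth_elem_def by auto

lemma fst_std_restr [simp]: "fst (std_restr R X) = card X"
  by (simp add: std_restr_def)

lemma std_restr_empty [simp]: "std_restr R {} = empty_irel"
  unfolding std_restr_def empty_irel_def by simp

lemma std_restr_eq_empty_iff: "finite X \<Longrightarrow> std_restr R X = empty_irel \<longleftrightarrow> X = {}"
  unfolding std_restr_def empty_irel_def by auto

lemma std_restr_strict_mono:
  assumes "strict_mono_on {1..k} f" "f ` {1..k} = X"
  shows "std_restr R X = (k, pull_rel k f (snd R))"
  using nth_elem_unique[OF assms] unfolding std_restr_eq_pull_rel pull_rel_def by auto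

lemma std_restr_std_restr:
  assumes X: "finite X" and Z: "Z \<subseteq> {1..card X}"
  shows "std_restr (std_restr R X) Z = std_restr R (nth_elem X ` Z)"
proof -
  have fZ: "finite Z" using Z finite_subset by blast
  have in_X: "i \<in> {1..card Z} \<Longrightarrow> nth_elem Z i \<in> {1..card X}" for i
    using nth_elem_in[OF fZ] Z by blast
  have "strict_mono_on {1..card Z} (nth_elem X \<circ> nth_elem Z)"
    using in_X strict_mono_onD[OF strict_mono_on_nth_elem[OF X]]
      strict_mono_onD[OF strict_mono_on_nth_elem[OF fZ]]
    by (auto intro!: strict_mono_onI)
  moreover have "(nth_elem X \<circ> nth_elem Z) ` {1..card Z} = nth_elem X ` Z"
    using nth_elem_image[OF fZ] by (metis image_comp)
  ultimately have "std_restr R (nth_elem X ` Z) = (card Z, pull_rel (card Z) (nth_elem X \<circ> nth_elem Z) (snd R))"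
    by (rule std_restr_strict_mono)
  then show ?thesis
    using in_X unfolding std_restr_eq_pull_rel[of _ Z] std_restr_eq_pull_rel[of R X] pull_rel_def by auto
qed

lemma std_restr_shifted_interval: "std_restr R {a+1..a+k} = (k, pull_rel k (\<lambda>i. i + a) (snd R))"
  by (rule std_restr_strict_mono) (auto intro: strict_mono_onI)

lemma std_restr_initial_interval: "std_restr R {1..k} = (k, snd R \<inter> ({1..k} \<times> {1..k}))"
  using std_restr_shifted_interval[of R 0 k] by (auto simp: pull_rel_def)

lemma std_restr_std_restr_interval:
  assumes "b + l \<le> k"
  shows "std_restr (std_restr R {a+1..a+k}) {b+1..b+l} = std_restr R {a+b+1..a+b+l}"
  unfolding std_restr_shifted_interval using assms by (auto simp: pull_rel_def ac_simps)

lemma nth_elem_shifted_interval: "i \<in> {1..k} \<Longrightarrow> nth_elem {a+1..a+k} i = i + a"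
proof -
  have "strict_mono_on {1..k} (\<lambda>i. i + a)" by (rule strict_mono_onI) simp
  moreover have "(\<lambda>i. i + a) ` {1..k} = {a+1..a+k}" by (simp add: add.commute)
  ultimately show "i \<in> {1..k} \<Longrightarrow> nth_elem {a+1..a+k} i = i + a"
    by (rule nth_elem_unique(2))
qed

lemma std_restr_std_restr_shifted_interval:
  assumes "X \<subseteq> {1..k}"
  shows "std_restr (std_restr T {a+1..a+k}) X = std_restr T ((\<lambda>i. i + a) ` X)"
proof -
  have "nth_elem {a+1..a+k} ` X = (\<lambda>i. i + a) ` X"
    using assms nth_elem_shifted_interval by (intro image_cong) auto
  then show ?thesis
    using std_restr_std_restr[of "{a+1..a+k}" X T] assms by simp
qed

lemma nth_elem_Un_image:
  assumes A: "finite A" and B: "finite B" and less: "\<forall>a\<in>A. \<forall>b\<in>B. a < b"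
  shows "nth_elem (A \<union> B) ` {1..card A} = A"
    and "nth_elem (A \<union> B) ` {card A + 1..card A + card B} = B"
proof -
  define f where "f i = (if i \<le> card A then nth_elem A i else nth_elem B (i - card A))" for i
  have low: "f ` {1..card A} = A"
    using nth_elem_image[OF A] by (auto simp: f_def image_iff)
  have shift: "{card A + 1..card A + card B} = (\<lambda>i. i + card A) ` {1..card B}"
    by (simp add: add.commute)
  have high: "f ` {card A + 1..card A + card B} = B"
    unfolding shift image_image using nth_elem_image[OF B] by (simp add: f_def)
  have mono: "strict_mono_on {1..card A + card B} f"
  proof (rule strict_mono_onI)
    fix i j assume i: "i \<in> {1..card A + card B}" and j: "j \<in> {1..card A + card B}" and "i < j"
    then consider "j \<le> card A" | "i \<le> card A" "card A < j" | "card A < i" by linarith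
    then show "f i < f j"
    proof cases
      case 1
      then show ?thesis
        using i \<open>i < j\<close> strict_mono_onD[OF strict_mono_on_nth_elem[OF A]] by (simp add: f_def)
    next
      case 2
      then have "i \<in> {1..card A}" "j - card A \<in> {1..card B}" using i j by auto
      then have "f i \<in> A" "f j \<in> B"
        using 2 nth_elem_in[OF A] nth_elem_in[OF B] by (simp_all add: f_def)
      then show ?thesis using less by blast
    next
      case 3
      then show ?thesis
        using j \<open>i < j\<close> strict_mono_onD[OF strict_mono_on_nth_elem[OF B], of "i - card A" "j - card A"]
        by (simp add: f_def)
    qed
  qed
  have ivl: "{1..card A + card B} = {1..card A} \<union> {card A + 1..card A + card B}"
    by auto
  have "f ` {1..card A + card B} = A \<union> B"
    unfolding ivl image_Un low high ..
  note eq = nth_elem_unique(2)[OF mono this]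
  have "nth_elem (A \<union> B) ` {1..card A} = f ` {1..card A}"
    by (intro image_cong refl eq) auto
  then show "nth_elem (A \<union> B) ` {1..card A} = A"
    using low by simp
  have "nth_elem (A \<union> B) ` {card A + 1..card A + card B} = f ` {card A + 1..card A + card B}"
    by (intro image_cong refl eq) auto
  then show "nth_elem (A \<union> B) ` {card A + 1..card A + card B} = B"
    using high by simp
qed

lemma std_restr_std_restr_Un:
  assumes A: "finite A" and B: "finite B" and less: "\<forall>a\<in>A. \<forall>b\<in>B. a < b"
  shows "std_restr (std_restr T (A \<union> B)) {1..card A} = std_restr T A"
    and "std_restr (std_restr T (A \<union> B)) {card A + 1..card A + card B} = std_restr T B"
proof -
  have card: "card (A \<union> B) = card A + card B"
    using A B less by (intro card_Un_disjoint) auto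
  show "std_restr (std_restr T (A \<union> B)) {1..card A} = std_restr T A"
    using std_restr_std_restr[of "A \<union> B" "{1..card A}" T] nth_elem_Un_image(1)[OF assms] card A B by simp
  show "std_restr (std_restr T (A \<union> B)) {card A + 1..card A + card B} = std_restr T B"
    using std_restr_std_restr[of "A \<union> B" "{card A + 1..card A + card B}" T] nth_elem_Un_image(2)[OF assms]
      card A B by simp
qed

lemma IRel_iff: "R \<in> IRel n \<longleftrightarrow> fst R = n \<and> snd R \<subseteq> {1..n} \<times> {1..n} \<and> (\<forall>i\<in>{1..n}. (i, i) \<in> snd R)"
  unfolding IRel_def by (cases R) auto

lemma irels_iff_IRel: "R \<in> irels \<longleftrightarrow> R \<in> IRel (fst R)"
proof -
  have "R \<in> IRel n \<Longrightarrow> n = fst R" for n by (simp add: IRel_iff)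
  then show ?thesis unfolding irels_def by auto
qed

lemma finite_IRel: "finite (IRel n)"
proof -
  have "IRel n \<subseteq> Pair n ` Pow ({1..n} \<times> {1..n})" unfolding IRel_def by auto
  then show ?thesis by (rule finite_subset) simp
qed

lemma empty_irel_in_irels: "empty_irel \<in> irels"
  unfolding empty_irel_def irels_iff_IRel IRel_iff by simp

lemma irels_size_0: "R \<in> irels \<Longrightarrow> fst R = 0 \<Longrightarrow> R = empty_irel"
  unfolding irels_iff_IRel IRel_iff empty_irel_def by (cases R) auto

lemma std_restr_in_IRel:
  assumes R: "R \<in> IRel n" and X: "X \<subseteq> {1..n}"
  shows "std_restr R X \<in> IRel (card X)"
proof -
  have "nth_elem X i \<in> {1..n}" if "i \<in> {1..card X}" for i
    using nth_elem_in[OF finite_subset[OF X finite_atLeastAtMost] that] X by blast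
  then show ?thesis
    using R unfolding IRel_iff std_restr_eq_pull_rel pull_rel_def by auto
qed

lemma std_restr_in_irels: "R \<in> irels \<Longrightarrow> X \<subseteq> {1..fst R} \<Longrightarrow> std_restr R X \<in> irels"
  using std_restr_in_IRel unfolding irels_iff_IRel by simp

lemma std_restr_full: "R \<in> IRel n \<Longrightarrow> std_restr R {1..n} = R"
  unfolding std_restr_initial_interval IRel_iff by (cases R) auto

section \<open>The product\<close>

lemma shift_image_pull_rel:
  "(\<lambda>(i, j). (i + n, j + n)) ` pull_rel m (\<lambda>i. i + n) T = T \<inter> ({n+1..n+m} \<times> {n+1..n+m})"
proof (intro set_eqI iffI)
  fix x assume "x \<in> T \<inter> ({n+1..n+m} \<times> {n+1..n+m})"
  then obtain a b where "x = (a, b)" "(a, b) \<in> T" "a \<in> {n+1..n+m}" "b \<in> {n+1..n+m}" by auto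
  then show "x \<in> (\<lambda>(i, j). (i + n, j + n)) ` pull_rel m (\<lambda>i. i + n) T"
    unfolding image_iff pull_rel_def by (intro bexI[where x = "(a - n, b - n)"]) auto
qed (auto simp: pull_rel_def)

lemma shsh_iff_std_restr:
  "T \<in> shsh R S \<longleftrightarrow> T \<in> IRel (fst R + fst S)
     \<and> std_restr T {1..fst R} = R \<and> std_restr T {fst R + 1..fst R + fst S} = S"
proof -
  obtain n Rr m Sr N Tr where RST: "R = (n, Rr)" "S = (m, Sr)" "T = (N, Tr)"
    by (cases R, cases S, cases T)
  have "inj (\<lambda>(i::nat, j::nat). (i + n, j + n))" by (auto simp: inj_def)
  then have "Tr \<inter> ({n+1..n+m} \<times> {n+1..n+m}) = (\<lambda>(i, j). (i + n, j + n)) ` Sr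
      \<longleftrightarrow> pull_rel m (\<lambda>i. i + n) Tr = Sr"
    unfolding shift_image_pull_rel[symmetric] by (simp add: inj_image_eq_iff)
  then show ?thesis
    unfolding RST shsh_def std_restr_initial_interval std_restr_shifted_interval
    by (auto simp: IRel_iff)
qed

lemma shsh_subset_IRel: "shsh R S \<subseteq> IRel (fst R + fst S)"
  using shsh_iff_std_restr by blast

lemma shsh_subset_irels: "shsh R S \<subseteq> irels"
  using shsh_subset_IRel unfolding irels_def by blast

lemma finite_shsh: "finite (shsh R S)"
  using shsh_subset_IRel finite_IRel finite_subset by blast

lemma fst_shsh: "T \<in> shsh R S \<Longrightarrow> fst T = fst R + fst S"
  by (metis IRel_iff shsh_subset_IRel subsetD)

lemma shsh_empty_left:
  assumes "S \<in> irels"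
  shows "shsh empty_irel S = {S}"
proof -
  have eq: "T \<in> shsh empty_irel S \<longleftrightarrow> T \<in> IRel (fst S) \<and> std_restr T {1..fst S} = S" for T
    unfolding shsh_iff_std_restr by (simp add: empty_irel_def)
  show ?thesis
  proof (intro set_eqI iffI)
    fix T assume "T \<in> shsh empty_irel S"
    then show "T \<in> {S}" using std_restr_full[of T "fst S"] unfolding eq by simp
  next
    fix T assume "T \<in> {S}"
    then show "T \<in> shsh empty_irel S"
      using assms std_restr_full[of S "fst S"] unfolding eq irels_iff_IRel by simp
  qed
qed

lemma shsh_empty_right:
  assumes "R \<in> irels"
  shows "shsh R empty_irel = {R}"
proof -
  have eq: "T \<in> shsh R empty_irel \<longleftrightarrow> T \<in> IRel (fst R) \<and> std_restr T {1..fst R} = R" for T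
    unfolding shsh_iff_std_restr by (simp add: empty_irel_def)
  show ?thesis
  proof (intro set_eqI iffI)
    fix T assume "T \<in> shsh R empty_irel"
    then show "T \<in> {R}" using std_restr_full[of T "fst R"] unfolding eq by simp
  next
    fix T assume "T \<in> {R}"
    then show "T \<in> shsh R empty_irel"
      using assms std_restr_full[of R "fst R"] unfolding eq irels_iff_IRel by simp
  qed
qed

text \<open>Both bracketings of a triple product of basis elements are sums over these triple shuffles.\<close>

definition shsh3 :: "irel \<Rightarrow> irel \<Rightarrow> irel \<Rightarrow> irel set" where
  "shsh3 R S U = {T. T \<in> IRel (fst R + fst S + fst U) \<and> std_restr T {1..fst R} = R
     \<and> std_restr T {fst R + 1..fst R + fst S} = S
     \<and> std_restr T {fst R + fst S + 1..fst R + fst S + fst U} = U}"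

lemma sum_indicator_unique:
  assumes "finite A" "\<And>x. x \<in> A \<Longrightarrow> P x \<Longrightarrow> x = w" "Q \<longleftrightarrow> w \<in> A \<and> P w"
  shows "(\<Sum>x\<in>A. if P x then 1 else 0 :: 'k::comm_semiring_1) = (if Q then 1 else 0)"
proof -
  have "(\<Sum>x\<in>A. if P x then 1 else 0 :: 'k) = (\<Sum>x\<in>A. if x = w \<and> P w then 1 else 0)"
  proof (rule sum.cong[OF refl])
    fix x assume "x \<in> A"
    then show "(if P x then 1 else 0 :: 'k) = (if x = w \<and> P w then 1 else 0)"
      using assms(2)[of x] by (cases "P x") auto
  qed
  also have "\<dots> = (if w \<in> A \<and> P w then 1 else 0)"
    using assms(1) by (cases "P w") (simp_all add: sum.delta)
  finally show ?thesis using assms(3) by simp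
qed

lemma sum_shsh_left:
  "(\<Sum>W\<in>shsh R S. if T \<in> shsh W U then 1 else 0 :: 'k::comm_semiring_1)
     = (if T \<in> shsh3 R S U then 1 else 0)"
proof (rule sum_indicator_unique[OF finite_shsh])
  let ?n = "fst R" and ?m = "fst S" and ?w = "std_restr T {1..fst R + fst S}"
  show "W = ?w" if "W \<in> shsh R S" "T \<in> shsh W U" for W
    using fst_shsh[OF that(1)] that(2) unfolding shsh_iff_std_restr by simp
  have low: "std_restr ?w {1..?n} = std_restr T {1..?n}"
    using std_restr_std_restr_interval[where a = 0 and b = 0 and l = ?n and k = "?n + ?m" and R = T] by simp
  have mid: "std_restr ?w {?n + 1..?n + ?m} = std_restr T {?n + 1..?n + ?m}"
    using std_restr_std_restr_interval[where a = 0 and b = ?n and l = ?m and k = "?n + ?m" and R = T] by simp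
  have irel: "T \<in> IRel (?n + ?m + fst U) \<Longrightarrow> ?w \<in> IRel (?n + ?m)"
    using std_restr_in_IRel[of T _ "{1..?n + ?m}"] by simp
  have fst_w: "fst ?w = ?n + ?m" by simp
  show "T \<in> shsh3 R S U \<longleftrightarrow> ?w \<in> shsh R S \<and> T \<in> shsh ?w U"
    unfolding shsh3_def shsh_iff_std_restr mem_Collect_eq fst_w low mid using irel by blast
qed

lemma sum_shsh_right:
  "(\<Sum>W\<in>shsh S U. if T \<in> shsh R W then 1 else 0 :: 'k::comm_semiring_1)
     = (if T \<in> shsh3 R S U then 1 else 0)"
proof (rule sum_indicator_unique[OF finite_shsh])
  let ?n = "fst R" and ?m = "fst S" and ?p = "fst U" and ?w = "std_restr T {fst R + 1..fst R + (fst S + fst U)}"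
  show "W = ?w" if "W \<in> shsh S U" "T \<in> shsh R W" for W
    using fst_shsh[OF that(1)] that(2) unfolding shsh_iff_std_restr by simp
  have low: "std_restr ?w {1..?m} = std_restr T {?n + 1..?n + ?m}"
    using std_restr_std_restr_interval[where a = ?n and b = 0 and l = ?m and k = "?m + ?p" and R = T] by simp
  have high: "std_restr ?w {?m + 1..?m + ?p} = std_restr T {?n + ?m + 1..?n + ?m + ?p}"
    using std_restr_std_restr_interval[where a = ?n and b = ?m and l = ?p and k = "?m + ?p" and R = T] by simp
  have irel: "T \<in> IRel (?n + ?m + ?p) \<Longrightarrow> ?w \<in> IRel (?m + ?p)"
    using std_restr_in_IRel[of T _ "{?n + 1..?n + (?m + ?p)}"] by (simp add: add.assoc)
  have fst_w: "fst ?w = ?m + ?p" by simp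
  show "T \<in> shsh3 R S U \<longleftrightarrow> ?w \<in> shsh S U \<and> T \<in> shsh R ?w"
    unfolding shsh3_def shsh_iff_std_restr mem_Collect_eq fst_w low high add.assoc using irel[unfolded add.assoc] by blast
qed

lemma fsupp_mult_basis: "fsupp (mult_basis R S :: irel \<Rightarrow> 'k::zero_neq_one) = shsh R S"
  unfolding mult_basis_def fsupp_def by auto

lemma finite_fsupp_mult_basis: "finite (fsupp (mult_basis R S :: irel \<Rightarrow> 'k::zero_neq_one))"
  by (simp add: fsupp_mult_basis finite_shsh)

lemma lin_mult_basis: "lin F (mult_basis R S) = (\<lambda>y. \<Sum>T\<in>shsh R S. F T y)"
  unfolding mult_basis_def by (rule lin_indicator[OF finite_shsh])

lemma mult_basis_assoc:
  "lin (\<lambda>W. mult_basis W U) (mult_basis R S) = (lin (mult_basis R) (mult_basis S U) :: irel \<Rightarrow> 'k::comm_semiring_1)"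
  unfolding lin_mult_basis by (simp add: mult_basis_def sum_shsh_left sum_shsh_right)

lemma mult_basis_empty_irel_left: "S \<in> irels \<Longrightarrow> mult_basis empty_irel S = bas S"
  by (simp add: mult_basis_def bas_def shsh_empty_left)

lemma mult_basis_empty_irel_right: "R \<in> irels \<Longrightarrow> mult_basis R empty_irel = bas R"
  by (simp add: mult_basis_def bas_def shsh_empty_right)

lemma mult_bas_bas: "mult (bas R) (bas S) = mult_basis R S"
  unfolding mult_def by simp

lemma finite_fsupp_lin_mult_basis:
  assumes "finite (fsupp b)"
  shows "finite (fsupp (lin (mult_basis R) b :: irel \<Rightarrow> 'k::comm_semiring_1))"
  by (rule finite_subset[OF fsupp_lin_subset]) (simp add: assms finite_fsupp_mult_basis)

lemma mult_in_fs_on: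
  fixes a b :: "irel \<Rightarrow> 'k::comm_semiring_1"
  assumes "a \<in> fs_on irels" "b \<in> fs_on irels"
  shows "mult a b \<in> fs_on irels"
  unfolding mult_def
proof (rule lin_in_fs_on[OF fs_on_finite[OF assms(1)]])
  fix R show "lin (mult_basis R) b \<in> fs_on irels"
    by (rule lin_in_fs_on[OF fs_on_finite[OF assms(2)]])
      (simp add: fs_on_def fsupp_mult_basis finite_shsh shsh_subset_irels)
qed

lemma mult_assoc:
  fixes a b c :: "irel \<Rightarrow> 'k::comm_semiring_1"
  assumes a: "finite (fsupp a)" and b: "finite (fsupp b)" and c: "finite (fsupp c)"
  shows "mult (mult a b) c = mult a (mult b c)"
proof -
  note fin = finite_fsupp_mult_basis finite_fsupp_lin_mult_basis
  have "mult (mult a b) c = lin (\<lambda>R. lin (\<lambda>W. lin (mult_basis W) c) (lin (mult_basis R) b)) a"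
    unfolding mult_def by (rule lin_lin[OF a fin(2)[OF b]])
  also have "\<dots> = lin (\<lambda>R. lin (\<lambda>S. lin (\<lambda>U. lin (\<lambda>W. mult_basis W U) (mult_basis R S)) c) b) a"
  proof (rule lin_cong)
    fix R
    have "lin (\<lambda>W. lin (mult_basis W) c) (lin (mult_basis R) b)
        = lin (\<lambda>S. lin (\<lambda>W. lin (mult_basis W) c) (mult_basis R S)) b"
      by (rule lin_lin[OF b fin(1)])
    also have "\<dots> = lin (\<lambda>S. lin (\<lambda>U. lin (\<lambda>W. mult_basis W U) (mult_basis R S)) c) b"
      by (rule lin_cong) (rule lin_commute)
    finally show "lin (\<lambda>W. lin (mult_basis W) c) (lin (mult_basis R) b) = \<dots>" .
  qed
  also have "\<dots> = lin (\<lambda>R. lin (\<lambda>S. lin (\<lambda>U. lin (mult_basis R) (mult_basis S U)) c) b) a"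
    unfolding mult_basis_assoc ..
  also have "\<dots> = lin (\<lambda>R. lin (mult_basis R) (lin (\<lambda>S. lin (mult_basis S) c) b)) a"
  proof (rule lin_cong)
    fix R
    have "lin (mult_basis R) (lin (\<lambda>S. lin (mult_basis S) c) b)
        = lin (\<lambda>S. lin (mult_basis R) (lin (mult_basis S) c)) b"
      by (rule lin_lin[OF b fin(2)[OF c]])
    also have "\<dots> = lin (\<lambda>S. lin (\<lambda>U. lin (mult_basis R) (mult_basis S U)) c) b"
      by (rule lin_cong) (rule lin_lin[OF c fin(1)])
    finally show "lin (\<lambda>S. lin (\<lambda>U. lin (mult_basis R) (mult_basis S U)) c) b
        = lin (mult_basis R) (lin (\<lambda>S. lin (mult_basis S) c) b)" ..
  qed
  also have "\<dots> = mult a (mult b c)"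
    unfolding mult_def ..
  finally show ?thesis .
qed

lemma mult_unit_left:
  assumes "a \<in> fs_on irels"
  shows "mult (bas empty_irel) a = a"
proof -
  have "mult (bas empty_irel) a = lin bas a"
    unfolding mult_def lin_bas
    by (rule lin_cong) (simp add: mult_basis_empty_irel_left fs_on_subset[OF assms])
  then show ?thesis using lin_bas_self[OF fs_on_finite[OF assms]] by simp
qed

lemma mult_unit_right:
  assumes "a \<in> fs_on irels"
  shows "mult a (bas empty_irel) = a"
proof -
  have "mult a (bas empty_irel) = lin bas a"
    unfolding mult_def lin_bas
    by (rule lin_cong) (simp add: mult_basis_empty_irel_right fs_on_subset[OF assms])
  then show ?thesis using lin_bas_self[OF fs_on_finite[OF assms]] by simp
qed

lemma mult_sum_left:
  assumes "finite I" "\<And>i. i \<in> I \<Longrightarrow> finite (fsupp (f i))"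
  shows "mult (\<lambda>T. \<Sum>i\<in>I. f i T) b = (\<lambda>T. \<Sum>i\<in>I. mult (f i) b T)"
  unfolding mult_def by (rule lin_sum[OF assms])

lemma mult_sum_right:
  assumes "finite I" "\<And>i. i \<in> I \<Longrightarrow> finite (fsupp (g i))"
  shows "mult a (\<lambda>T. \<Sum>i\<in>I. g i T) = (\<lambda>T. \<Sum>i\<in>I. mult a (g i) T)"
proof -
  have "mult a (\<lambda>T. \<Sum>i\<in>I. g i T) = lin (\<lambda>R y. \<Sum>i\<in>I. lin (mult_basis R) (g i) y) a"
    unfolding mult_def by (rule lin_cong) (rule lin_sum[OF assms])
  then show ?thesis unfolding lin_sum_kernel mult_def .
qed

lemma mult_zero_left: "mult (\<lambda>_. 0) b = (\<lambda>_. 0)"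
  unfolding mult_def lin_zero ..

lemma mult_zero_right: "mult a (\<lambda>_. 0) = (\<lambda>_. 0)"
  unfolding mult_def lin_zero lin_zero_kernel ..

lemma empty_irel_in_shsh_iff:
  assumes "R \<in> irels" "S \<in> irels"
  shows "empty_irel \<in> shsh R S \<longleftrightarrow> R = empty_irel \<and> S = empty_irel"
proof
  assume "empty_irel \<in> shsh R S"
  then have "fst R + fst S = 0" using fst_shsh by (fastforce simp: empty_irel_def)
  then show "R = empty_irel \<and> S = empty_irel" using irels_size_0 assms by simp
qed (simp add: shsh_empty_left empty_irel_in_irels)

lemma mult_at_empty_irel:
  fixes a b :: "irel \<Rightarrow> 'k::comm_semiring_1"
  assumes a: "a \<in> fs_on irels" and b: "b \<in> fs_on irels"
  shows "mult a b empty_irel = a empty_irel * b empty_irel"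
proof -
  have "mult_basis R S empty_irel = (bas empty_irel R * bas empty_irel S :: 'k)" if "R \<in> irels" "S \<in> irels" for R S
    using empty_irel_in_shsh_iff[OF that] by (auto simp: mult_basis_def bas_def)
  then have "mult a b empty_irel = (\<Sum>R\<in>fsupp a. a R * (\<Sum>S\<in>fsupp b. b S * bas empty_irel S) * bas empty_irel R)"
    unfolding mult_def lin_def using fs_on_subset[OF a] fs_on_subset[OF b]
    by (simp add: sum_distrib_left sum_distrib_right mult_ac)
  also have "\<dots> = (\<Sum>R\<in>fsupp a. a R * bas empty_irel R) * (\<Sum>S\<in>fsupp b. b S * bas empty_irel S)"
    by (simp add: sum_distrib_right mult_ac)
  also have "\<dots> = a empty_irel * b empty_irel"
    using sum_times_bas[OF fs_on_finite[OF a]] sum_times_bas[OF fs_on_finite[OF b]] by simp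
  finally show ?thesis .
qed

lemma grading_mult: "(mult (bas R) (bas S) T :: 'k::comm_semiring_1) \<noteq> 0 \<Longrightarrow> fst T = fst R + fst S"
  unfolding mult_bas_bas mult_basis_def by (auto split: if_splits intro: fst_shsh)

section \<open>Total cuts\<close>

definition strictly_precedes :: "(nat \<times> nat) set \<Rightarrow> nat set \<Rightarrow> nat set \<Rightarrow> bool" where
  "strictly_precedes R P Q \<longleftrightarrow> (\<forall>x\<in>P. \<forall>y\<in>Q. (x, y) \<in> R \<and> (y, x) \<notin> R)"

definition splits :: "irel \<Rightarrow> nat set \<Rightarrow> (nat set \<times> nat set) set" where
  "splits R Z = {(A, B). A \<inter> B = {} \<and> A \<union> B = Z \<and> strictly_precedes (snd R) A B}"

definition cuts :: "irel \<Rightarrow> (nat set \<times> nat set) set" where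
  "cuts R = splits R {1..fst R}"

lemma cuts_iff_total_cut: "(X, Y) \<in> cuts R \<longleftrightarrow> total_cut R X Y"
  unfolding cuts_def splits_def total_cut_def strictly_precedes_def by simp

lemma mem_cuts:
  "(X, Y) \<in> cuts R \<longleftrightarrow> X \<inter> Y = {} \<and> X \<union> Y = {1..fst R} \<and> strictly_precedes (snd R) X Y"
  unfolding cuts_def splits_def by simp

lemma strictly_precedes_Un_left:
  "strictly_precedes R (A \<union> B) C \<longleftrightarrow> strictly_precedes R A C \<and> strictly_precedes R B C"
  unfolding strictly_precedes_def by blast

lemma strictly_precedes_Un_right:
  "strictly_precedes R A (B \<union> C) \<longleftrightarrow> strictly_precedes R A B \<and> strictly_precedes R A C"
  unfolding strictly_precedes_def by blast

lemma cut_subset: "(X, Y) \<in> cuts R \<Longrightarrow> X \<subseteq> {1..fst R} \<and> Y \<subseteq> {1..fst R}"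
  unfolding mem_cuts by blast

lemma finite_cut: "c \<in> cuts R \<Longrightarrow> finite (fst c) \<and> finite (snd c)"
  using cut_subset[of "fst c" "snd c" R] finite_subset by (metis finite_atLeastAtMost prod.collapse)

lemma finite_splits:
  assumes "finite Z"
  shows "finite (splits R Z)"
proof -
  have "splits R Z \<subseteq> Pow Z \<times> Pow Z" by (auto simp: splits_def)
  then show ?thesis by (rule finite_subset) (simp add: assms)
qed

lemma finite_cuts: "finite (cuts R)"
  unfolding cuts_def by (simp add: finite_splits)

lemma card_cut:
  assumes "c \<in> cuts R"
  shows "card (fst c) + card (snd c) = fst R"
proof -
  obtain X Y where c: "c = (X, Y)" by (cases c)
  have "card (X \<union> Y) = card X + card Y"
    using assms finite_cut[OF assms] c by (intro card_Un_disjoint) (simp_all add: mem_cuts)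
  then show ?thesis using assms c by (simp add: mem_cuts)
qed

lemma cut_empty_left: "({}, {1..fst R}) \<in> cuts R"
  unfolding mem_cuts strictly_precedes_def by simp

lemma cut_empty_right: "({1..fst R}, {}) \<in> cuts R"
  unfolding mem_cuts strictly_precedes_def by simp

lemma cut_eq_empty_left: "c \<in> cuts R \<Longrightarrow> fst c = {} \<longleftrightarrow> c = ({}, {1..fst R})"
  using mem_cuts[of "fst c" "snd c" R] by (auto simp: prod_eq_iff)

lemma cut_eq_empty_right: "c \<in> cuts R \<Longrightarrow> snd c = {} \<longleftrightarrow> c = ({1..fst R}, {})"
  using mem_cuts[of "fst c" "snd c" R] by (auto simp: prod_eq_iff)

lemma cuts_empty_irel: "cuts empty_irel = {({}, {})}"
  unfolding cuts_def splits_def empty_irel_def strictly_precedes_def by auto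

lemma cut_parts_in_irels:
  assumes "R \<in> irels" "c \<in> cuts R"
  shows "std_restr R (fst c) \<in> irels \<and> std_restr R (snd c) \<in> irels"
  using cut_subset[of "fst c" "snd c" R] assms(2) std_restr_in_irels[OF assms(1)] by simp

definition positions :: "nat set \<Rightarrow> nat set \<Rightarrow> nat set" where
  "positions Z A = {i\<in>{1..card Z}. nth_elem Z i \<in> A}"

lemma positions_subset: "positions Z A \<subseteq> {1..card Z}"
  by (auto simp: positions_def)

lemma positions_image:
  assumes "finite Z" "X \<subseteq> {1..card Z}"
  shows "positions Z (nth_elem Z ` X) = X"
proof
  have inj: "inj_on (nth_elem Z) {1..card Z}"
    using bij_betw_nth_elem[OF assms(1)] by (simp add: bij_betw_def)
  show "positions Z (nth_elem Z ` X) \<subseteq> X"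
    using inj_on_image_mem_iff[OF inj _ assms(2)] by (auto simp: positions_def)
  show "X \<subseteq> positions Z (nth_elem Z ` X)"
    using assms(2) by (auto simp: positions_def)
qed

lemma image_positions:
  assumes "finite Z" "A \<subseteq> Z"
  shows "nth_elem Z ` positions Z A = A"
proof
  show "nth_elem Z ` positions Z A \<subseteq> A" by (auto simp: positions_def)
  show "A \<subseteq> nth_elem Z ` positions Z A"
  proof
    fix x assume "x \<in> A"
    have img: "nth_elem Z ` {1..card Z} = Z" by (rule nth_elem_image[OF assms(1)])
    then have "x \<in> nth_elem Z ` {1..card Z}" using \<open>x \<in> A\<close> assms(2) by auto
    then obtain i where "i \<in> {1..card Z}" "x = nth_elem Z i" by (rule imageE)
    then show "x \<in> nth_elem Z ` positions Z A" using \<open>x \<in> A\<close> by (auto simp: positions_def)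
  qed
qed

lemma strictly_precedes_std_restr:
  assumes "X1 \<subseteq> {1..card Z}" "X2 \<subseteq> {1..card Z}"
  shows "strictly_precedes (snd (std_restr R Z)) X1 X2
    \<longleftrightarrow> strictly_precedes (snd R) (nth_elem Z ` X1) (nth_elem Z ` X2)"
  using assms unfolding std_restr_eq_pull_rel strictly_precedes_def pull_rel_def by auto

lemma image_cut_in_splits:
  assumes Z: "finite Z" and c: "(X1, X2) \<in> cuts (std_restr R Z)"
  shows "(nth_elem Z ` X1, nth_elem Z ` X2) \<in> splits R Z"
proof -
  have sub: "X1 \<subseteq> {1..card Z}" "X2 \<subseteq> {1..card Z}" and disj: "X1 \<inter> X2 = {}"
    and un: "X1 \<union> X2 = {1..card Z}"
    using cut_subset[OF c] c unfolding mem_cuts by auto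
  have inj: "inj_on (nth_elem Z) {1..card Z}"
    using bij_betw_nth_elem[OF Z] by (simp add: bij_betw_def)
  have "nth_elem Z ` X1 \<inter> nth_elem Z ` X2 = {}"
    using inj_on_image_Int[OF inj sub] disj by simp
  moreover have "nth_elem Z ` X1 \<union> nth_elem Z ` X2 = Z"
    using nth_elem_image[OF Z] un by (simp add: image_Un[symmetric])
  moreover have "strictly_precedes (snd R) (nth_elem Z ` X1) (nth_elem Z ` X2)"
    using strictly_precedes_std_restr[OF sub] c by (simp add: mem_cuts)
  ultimately show ?thesis
    by (simp add: splits_def)
qed

lemma positions_split_in_cuts:
  assumes Z: "finite Z" and s: "(A, B) \<in> splits R Z"
  shows "(positions Z A, positions Z B) \<in> cuts (std_restr R Z)"
proof -
  have sub: "A \<subseteq> Z" "B \<subseteq> Z" and disj: "A \<inter> B = {}" and un: "A \<union> B = Z"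
    and prec: "strictly_precedes (snd R) A B"
    using s by (auto simp: splits_def)
  have "positions Z A \<inter> positions Z B = {}"
    using disj by (auto simp: positions_def)
  moreover have "positions Z A \<union> positions Z B = {1..card Z}"
  proof
    show "positions Z A \<union> positions Z B \<subseteq> {1..card Z}" by (rule Un_least) (rule positions_subset)+
    show "{1..card Z} \<subseteq> positions Z A \<union> positions Z B"
    proof
      fix i assume i: "i \<in> {1..card Z}"
      then have "nth_elem Z i \<in> A \<union> B" using nth_elem_in[OF Z i] un by simp
      then show "i \<in> positions Z A \<union> positions Z B" using i by (auto simp: positions_def)
    qed
  qed
  moreover have "strictly_precedes (snd (std_restr R Z)) (positions Z A) (positions Z B)"
    using strictly_precedes_std_restr[OF positions_subset positions_subset] prec
      image_positions[OF Z sub(1)] image_positions[OF Z sub(2)] by simp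
  ultimately show ?thesis
    by (simp add: mem_cuts)
qed

lemma bij_betw_cuts_std_restr_splits:
  assumes Z: "finite Z"
  shows "bij_betw (\<lambda>(X1, X2). (nth_elem Z ` X1, nth_elem Z ` X2)) (cuts (std_restr R Z)) (splits R Z)"
proof (rule bij_betw_byWitness[where f' = "\<lambda>(A, B). (positions Z A, positions Z B)"])
  show "\<forall>c\<in>cuts (std_restr R Z). (\<lambda>(A, B). (positions Z A, positions Z B))
      ((\<lambda>(X1, X2). (nth_elem Z ` X1, nth_elem Z ` X2)) c) = c"
  proof
    fix c assume c: "c \<in> cuts (std_restr R Z)"
    obtain X1 X2 where c_eq: "c = (X1, X2)" by (cases c)
    have "X1 \<subseteq> {1..card Z}" "X2 \<subseteq> {1..card Z}"
      using cut_subset[of X1 X2 "std_restr R Z"] c c_eq by simp_all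
    then show "(\<lambda>(A, B). (positions Z A, positions Z B)) ((\<lambda>(X1, X2). (nth_elem Z ` X1, nth_elem Z ` X2)) c) = c"
      using c_eq positions_image[OF Z] by simp
  qed
  show "\<forall>c\<in>splits R Z. (\<lambda>(X1, X2). (nth_elem Z ` X1, nth_elem Z ` X2))
      ((\<lambda>(A, B). (positions Z A, positions Z B)) c) = c"
  proof
    fix c assume c: "c \<in> splits R Z"
    obtain A B where c_eq: "c = (A, B)" by (cases c)
    have "A \<subseteq> Z" "B \<subseteq> Z"
      using c c_eq by (auto simp: splits_def)
    then show "(\<lambda>(X1, X2). (nth_elem Z ` X1, nth_elem Z ` X2)) ((\<lambda>(A, B). (positions Z A, positions Z B)) c) = c"
      using c_eq image_positions[OF Z] by simp
  qed
  show "(\<lambda>(X1, X2). (nth_elem Z ` X1, nth_elem Z ` X2)) ` cuts (std_restr R Z) \<subseteq> splits R Z"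
  proof clarify
    fix X1 X2 assume "(X1, X2) \<in> cuts (std_restr R Z)"
    then show "(nth_elem Z ` X1, nth_elem Z ` X2) \<in> splits R Z" by (rule image_cut_in_splits[OF Z])
  qed
  show "(\<lambda>(A, B). (positions Z A, positions Z B)) ` splits R Z \<subseteq> cuts (std_restr R Z)"
  proof clarify
    fix A B assume "(A, B) \<in> splits R Z"
    then show "(positions Z A, positions Z B) \<in> cuts (std_restr R Z)" by (rule positions_split_in_cuts[OF Z])
  qed
qed

subsection \<open>Gluing along a cut\<close>

lemma map_prod_nth_elem_image_subset:
  assumes "finite X" "P \<subseteq> {1..card X} \<times> {1..card X}"
  shows "map_prod (nth_elem X) (nth_elem X) ` P \<subseteq> X \<times> X"
  using assms nth_elem_in by fastforce

lemma diag_in_map_prod_nth_elem_image: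
  assumes "finite X" "p \<in> X" "\<forall>i\<in>{1..card X}. (i, i) \<in> P"
  shows "(p, p) \<in> map_prod (nth_elem X) (nth_elem X) ` P"
proof -
  have "p \<in> nth_elem X ` {1..card X}" using assms(2) nth_elem_image[OF assms(1)] by simp
  then obtain i where "i \<in> {1..card X}" "p = nth_elem X i" by auto
  then show ?thesis using assms(3) by (auto intro!: image_eqI[where x = "(i, i)"])
qed

text \<open>The unique relation with cut \<open>(X, Y)\<close> whose standardized restrictions to \<open>X\<close> and \<open>Y\<close>
  are \<open>P\<close> and \<open>Q\<close>.\<close>

definition glue :: "nat set \<Rightarrow> nat set \<Rightarrow> (nat \<times> nat) set \<Rightarrow> (nat \<times> nat) set \<Rightarrow> (nat \<times> nat) set" where
  "glue X Y P Q = map_prod (nth_elem X) (nth_elem X) ` P \<union> map_prod (nth_elem Y) (nth_elem Y) ` Q \<union> X \<times> Y"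

lemma map_prod_image_pull_rel:
  assumes "bij_betw f {1..k} X"
  shows "map_prod f f ` pull_rel k f R = R \<inter> (X \<times> X)"
proof (intro set_eqI iffI)
  fix p assume "p \<in> map_prod f f ` pull_rel k f R"
  then show "p \<in> R \<inter> (X \<times> X)"
    using assms by (auto simp: pull_rel_def bij_betw_def)
next
  fix p assume p: "p \<in> R \<inter> (X \<times> X)"
  obtain x y where p_eq: "p = (x, y)" by (cases p)
  have "x \<in> f ` {1..k}" "y \<in> f ` {1..k}"
    using p p_eq assms by (auto simp: bij_betw_def)
  then obtain i j where "i \<in> {1..k}" "j \<in> {1..k}" "x = f i" "y = f j" by blast
  then show "p \<in> map_prod f f ` pull_rel k f R"
    using p p_eq by (auto simp: pull_rel_def intro!: image_eqI[where x = "(i, j)"])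
qed

lemma pull_rel_map_prod_image_Un:
  assumes inj: "inj_on f {1..k}" and P: "P \<subseteq> {1..k} \<times> {1..k}"
    and E: "\<And>i j. i \<in> {1..k} \<Longrightarrow> j \<in> {1..k} \<Longrightarrow> (f i, f j) \<notin> E"
  shows "pull_rel k f (map_prod f f ` P \<union> E) = P"
proof (intro set_eqI iffI)
  fix p assume p_in: "p \<in> pull_rel k f (map_prod f f ` P \<union> E)"
  obtain i j where p_eq: "p = (i, j)" by (cases p)
  with p_in have p: "p = (i, j)" "i \<in> {1..k}" "j \<in> {1..k}" "(f i, f j) \<in> map_prod f f ` P \<union> E"
    by (simp_all add: pull_rel_def)
  then have "(f i, f j) \<in> map_prod f f ` P" using E by blast
  then obtain i' j' where ij': "(i', j') \<in> P" "f i = f i'" "f j = f j'" by auto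
  with P have "i' \<in> {1..k}" "j' \<in> {1..k}" by auto
  then have "i = i'" "j = j'"
    using inj_onD[OF inj ij'(2) p(2)] inj_onD[OF inj ij'(3) p(3)] by simp_all
  then show "p \<in> P" using p ij' by simp
next
  fix p assume "p \<in> P"
  then show "p \<in> pull_rel k f (map_prod f f ` P \<union> E)"
    using P by (auto simp: pull_rel_def)
qed

lemma glue_std_restr:
  assumes T: "T \<in> IRel N" and c: "(X, Y) \<in> cuts T"
  shows "glue X Y (snd (std_restr T X)) (snd (std_restr T Y)) = snd T"
proof -
  have fin: "finite X" "finite Y" using finite_cut[OF c] by simp_all
  have sq: "snd T \<subseteq> (X \<union> Y) \<times> (X \<union> Y)" and p: "strictly_precedes (snd T) X Y"
    using T c by (simp_all add: IRel_iff mem_cuts)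
  have "glue X Y (snd (std_restr T X)) (snd (std_restr T Y))
      = (snd T \<inter> (X \<times> X)) \<union> (snd T \<inter> (Y \<times> Y)) \<union> X \<times> Y"
    unfolding glue_def std_restr_eq_pull_rel
    using map_prod_image_pull_rel[OF bij_betw_nth_elem[OF fin(1)]]
      map_prod_image_pull_rel[OF bij_betw_nth_elem[OF fin(2)]]
    by simp
  also have "\<dots> = snd T"
    using sq p by (auto simp: strictly_precedes_def)
  finally show ?thesis .
qed

lemma IRel_eq_by_cut:
  assumes "T \<in> IRel N" "T' \<in> IRel N" "(X, Y) \<in> cuts T" "(X, Y) \<in> cuts T'"
    and "std_restr T X = std_restr T' X" "std_restr T Y = std_restr T' Y"
  shows "T = T'"
proof -
  have "snd T = glue X Y (snd (std_restr T X)) (snd (std_restr T Y))"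
    by (rule glue_std_restr[OF assms(1,3), symmetric])
  also have "\<dots> = glue X Y (snd (std_restr T' X)) (snd (std_restr T' Y))"
    using assms(5,6) by simp
  also have "\<dots> = snd T'"
    by (rule glue_std_restr[OF assms(2,4)])
  finally show ?thesis
    using assms(1,2) by (simp add: prod_eq_iff IRel_iff)
qed

lemma std_restr_glue:
  assumes d: "X \<inter> Y = {}" and fin: "finite X" "finite Y"
    and U: "U \<in> IRel (card X)" and V: "V \<in> IRel (card Y)"
  shows "std_restr (N, glue X Y (snd U) (snd V)) X = U" and "std_restr (N, glue X Y (snd U) (snd V)) Y = V"
proof -
  have inj: "inj_on (nth_elem X) {1..card X}" "inj_on (nth_elem Y) {1..card Y}"
    using bij_betw_nth_elem[OF fin(1)] bij_betw_nth_elem[OF fin(2)] by (simp_all add: bij_betw_def)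
  have sq: "snd U \<subseteq> {1..card X} \<times> {1..card X}" "snd V \<subseteq> {1..card Y} \<times> {1..card Y}"
    using U V by (simp_all add: IRel_iff)
  note img = map_prod_nth_elem_image_subset[OF fin(1) sq(1)] map_prod_nth_elem_image_subset[OF fin(2) sq(2)]
  have "pull_rel (card X) (nth_elem X) (glue X Y (snd U) (snd V)) = snd U"
    unfolding glue_def Un_assoc
    by (rule pull_rel_map_prod_image_Un[OF inj(1) sq(1)])
      (use d nth_elem_in[OF fin(1)] in \<open>auto dest!: subsetD[OF img(2)]\<close>)
  then show "std_restr (N, glue X Y (snd U) (snd V)) X = U"
    unfolding std_restr_eq_pull_rel using U by (simp add: IRel_iff prod_eq_iff)
  have "pull_rel (card Y) (nth_elem Y) (glue X Y (snd U) (snd V)) = snd V"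
    unfolding glue_def Un_commute[of "map_prod (nth_elem X) (nth_elem X) ` snd U"] Un_assoc
    by (rule pull_rel_map_prod_image_Un[OF inj(2) sq(2)])
      (use d nth_elem_in[OF fin(2)] in \<open>auto dest!: subsetD[OF img(1)]\<close>)
  then show "std_restr (N, glue X Y (snd U) (snd V)) Y = V"
    unfolding std_restr_eq_pull_rel using V by (simp add: IRel_iff prod_eq_iff)
qed

lemma glue_props:
  assumes d: "X \<inter> Y = {}" "X \<union> Y = {1..N}"
    and U: "U \<in> IRel (card X)" and V: "V \<in> IRel (card Y)"
  defines "T \<equiv> (N, glue X Y (snd U) (snd V))"
  shows "T \<in> IRel N" and "(X, Y) \<in> cuts T" and "std_restr T X = U" and "std_restr T Y = V"
proof -
  have fin: "finite X" "finite Y" using d(2) by (metis finite_Un finite_atLeastAtMost)+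
  have sq: "snd U \<subseteq> {1..card X} \<times> {1..card X}" "\<forall>i\<in>{1..card X}. (i, i) \<in> snd U"
    "snd V \<subseteq> {1..card Y} \<times> {1..card Y}" "\<forall>i\<in>{1..card Y}. (i, i) \<in> snd V"
    using U V by (simp_all add: IRel_iff)
  note img = map_prod_nth_elem_image_subset[OF fin(1) sq(1)] map_prod_nth_elem_image_subset[OF fin(2) sq(3)]
  have "glue X Y (snd U) (snd V) \<subseteq> (X \<union> Y) \<times> (X \<union> Y)"
    using img unfolding glue_def by auto
  moreover have "(p, p) \<in> glue X Y (snd U) (snd V)" if "p \<in> X \<union> Y" for p
    using that diag_in_map_prod_nth_elem_image[OF fin(1) _ sq(2)] diag_in_map_prod_nth_elem_image[OF fin(2) _ sq(4)]
    unfolding glue_def by blast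
  ultimately show "T \<in> IRel N"
    unfolding T_def IRel_iff using d(2) by auto
  have "strictly_precedes (glue X Y (snd U) (snd V)) X Y"
    unfolding strictly_precedes_def
  proof (intro ballI conjI)
    fix x y assume xy: "x \<in> X" "y \<in> Y"
    then show "(x, y) \<in> glue X Y (snd U) (snd V)" by (simp add: glue_def)
    show "(y, x) \<notin> glue X Y (snd U) (snd V)"
    proof
      assume "(y, x) \<in> glue X Y (snd U) (snd V)"
      then have "(y, x) \<in> X \<times> X \<or> (y, x) \<in> Y \<times> Y \<or> (y, x) \<in> X \<times> Y"
        using img unfolding glue_def by auto
      then show False using xy d(1) by auto
    qed
  qed
  then show "(X, Y) \<in> cuts T"
    unfolding T_def mem_cuts using d by simp
  show "std_restr T X = U" "std_restr T Y = V"
    unfolding T_def by (rule std_restr_glue[OF d(1) fin U V])+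
qed

definition cuts3 :: "irel \<Rightarrow> (nat set \<times> nat set \<times> nat set) set" where
  "cuts3 R = {(A, B, C). A \<inter> B = {} \<and> A \<inter> C = {} \<and> B \<inter> C = {} \<and> A \<union> B \<union> C = {1..fst R}
      \<and> strictly_precedes (snd R) A B \<and> strictly_precedes (snd R) A C \<and> strictly_precedes (snd R) B C}"

lemma cuts3_iff_left: "(A, B, C) \<in> cuts3 R \<longleftrightarrow> (A \<union> B, C) \<in> cuts R \<and> (A, B) \<in> splits R (A \<union> B)"
  unfolding cuts3_def mem_cuts splits_def
  by (simp add: Int_Un_distrib2 strictly_precedes_Un_left conj_ac)

lemma cuts3_iff_right: "(A, B, C) \<in> cuts3 R \<longleftrightarrow> (A, B \<union> C) \<in> cuts R \<and> (B, C) \<in> splits R (B \<union> C)"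
  unfolding cuts3_def mem_cuts splits_def
  by (simp add: Int_Un_distrib strictly_precedes_Un_right Un_assoc conj_ac)

lemma sum_cuts_splits_left:
  "(\<Sum>(X, Y)\<in>cuts R. \<Sum>(A, B)\<in>splits R X. g A B Y) = (\<Sum>(A, B, C)\<in>cuts3 R. g A B C)"
proof -
  have "(\<Sum>(X, Y)\<in>cuts R. \<Sum>(A, B)\<in>splits R X. g A B Y)
      = (\<Sum>((X, Y), (A, B))\<in>Sigma (cuts R) (\<lambda>(X, Y). splits R X). g A B Y)"
    unfolding split_def
    by (subst sum.Sigma) (simp_all add: finite_cuts finite_splits finite_cut split_def)
  also have "\<dots> = (\<Sum>(A, B, C)\<in>cuts3 R. g A B C)"
    by (rule sum.reindex_bij_witness[where i = "\<lambda>(A, B, C). ((A \<union> B, C), (A, B))"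
          and j = "\<lambda>((X, Y), (A, B)). (A, B, Y)"])
      (auto simp: cuts3_iff_left splits_def)
  finally show ?thesis .
qed

lemma sum_cuts_splits_right:
  "(\<Sum>(X, Y)\<in>cuts R. \<Sum>(B, C)\<in>splits R Y. g X B C) = (\<Sum>(A, B, C)\<in>cuts3 R. g A B C)"
proof -
  have "(\<Sum>(X, Y)\<in>cuts R. \<Sum>(B, C)\<in>splits R Y. g X B C)
      = (\<Sum>((X, Y), (B, C))\<in>Sigma (cuts R) (\<lambda>(X, Y). splits R Y). g X B C)"
    unfolding split_def
    by (subst sum.Sigma) (simp_all add: finite_cuts finite_splits finite_cut split_def)
  also have "\<dots> = (\<Sum>(A, B, C)\<in>cuts3 R. g A B C)"
    by (rule sum.reindex_bij_witness[where i = "\<lambda>(A, B, C). ((A, B \<union> C), (B, C))"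
          and j = "\<lambda>((X, Y), (B, C)). (X, B, C)"])
      (auto simp: cuts3_iff_right splits_def)
  finally show ?thesis .
qed

lemma sum_cuts_std_restr:
  assumes "finite X"
  shows "(\<Sum>(X1, X2)\<in>cuts (std_restr R X). g (std_restr (std_restr R X) X1) (std_restr (std_restr R X) X2))
       = (\<Sum>(A, B)\<in>splits R X. g (std_restr R A) (std_restr R B))"
proof -
  have "(\<Sum>(X1, X2)\<in>cuts (std_restr R X). g (std_restr (std_restr R X) X1) (std_restr (std_restr R X) X2))
      = (\<Sum>(X1, X2)\<in>cuts (std_restr R X). g (std_restr R (nth_elem X ` X1)) (std_restr R (nth_elem X ` X2)))"
    using cut_subset[of _ _ "std_restr R X"]
    by (intro sum.cong refl) (auto simp: std_restr_std_restr[OF assms])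
  also have "\<dots> = (\<Sum>(A, B)\<in>splits R X. g (std_restr R A) (std_restr R B))"
    using sum.reindex_bij_betw[OF bij_betw_cuts_std_restr_splits[OF assms],
        of "\<lambda>(A, B). g (std_restr R A) (std_restr R B)"]
    by (simp add: split_def)
  finally show ?thesis .
qed

lemma sum_cuts_cuts_std_restr_left:
  "(\<Sum>(X, Y)\<in>cuts R. \<Sum>(X1, X2)\<in>cuts (std_restr R X).
      g (std_restr (std_restr R X) X1) (std_restr (std_restr R X) X2) (std_restr R Y))
   = (\<Sum>(A, B, C)\<in>cuts3 R. g (std_restr R A) (std_restr R B) (std_restr R C))"
  unfolding sum_cuts_splits_left[symmetric]
  by (intro sum.cong refl) (auto dest: finite_cut simp: sum_cuts_std_restr[where g = "\<lambda>P Q. g P Q _"])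

lemma sum_cuts_cuts_std_restr_right:
  "(\<Sum>(X, Y)\<in>cuts R. \<Sum>(Y1, Y2)\<in>cuts (std_restr R Y).
      g (std_restr R X) (std_restr (std_restr R Y) Y1) (std_restr (std_restr R Y) Y2))
   = (\<Sum>(A, B, C)\<in>cuts3 R. g (std_restr R A) (std_restr R B) (std_restr R C))"
  unfolding sum_cuts_splits_right[symmetric]
  by (intro sum.cong refl) (auto dest: finite_cut simp: sum_cuts_std_restr[where g = "g _"])

section \<open>The coproduct\<close>

definition cut_parts :: "irel \<Rightarrow> nat set \<times> nat set \<Rightarrow> irel \<times> irel" where
  "cut_parts R c = (std_restr R (fst c), std_restr R (snd c))"

lemma cop_basis_eq_card: "cop_basis R = (\<lambda>z. of_nat (card {c\<in>cuts R. cut_parts R c = z}))"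
proof
  fix z :: "irel \<times> irel"
  obtain U V where z: "z = (U, V)" by (cases z)
  have "{(X, Y). total_cut R X Y \<and> std_restr R X = U \<and> std_restr R Y = V} = {c\<in>cuts R. cut_parts R c = z}"
    unfolding z cut_parts_def by (auto simp: cuts_iff_total_cut)
  then show "cop_basis R z = of_nat (card {c\<in>cuts R. cut_parts R c = z})"
    unfolding cop_basis_def z by simp
qed

lemma lin_cop_basis: "lin F (cop_basis R) = (\<lambda>y. \<Sum>c\<in>cuts R. F (cut_parts R c) y)"
  unfolding cop_basis_eq_card by (rule lin_of_nat_card[OF finite_cuts])

lemma cop_basis_eq_sum: "cop_basis R = (\<lambda>y. \<Sum>c\<in>cuts R. bas (cut_parts R c) y :: 'k::comm_semiring_1)"
proof -
  have "fsupp (cop_basis R :: irel \<times> irel \<Rightarrow> 'k) \<subseteq> cut_parts R ` cuts R"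
    unfolding cop_basis_eq_card by (rule fsupp_of_nat_card_subset)
  then have "cop_basis R = lin bas (cop_basis R :: irel \<times> irel \<Rightarrow> 'k)"
    by (intro lin_bas_self[symmetric] finite_subset[OF _ finite_imageI[OF finite_cuts]])
  then show ?thesis unfolding lin_cop_basis .
qed

lemma finite_fsupp_cop_basis: "finite (fsupp (cop_basis R))"
  unfolding cop_basis_eq_card
  by (rule finite_subset[OF fsupp_of_nat_card_subset finite_imageI[OF finite_cuts]])

lemma cop_basis_in_fs_on:
  assumes "R \<in> irels"
  shows "(cop_basis R :: irel \<times> irel \<Rightarrow> 'k::comm_semiring_1) \<in> fs_on (irels \<times> irels)"
proof -
  have sub: "fsupp (cop_basis R :: irel \<times> irel \<Rightarrow> 'k) \<subseteq> cut_parts R ` cuts R"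
    unfolding cop_basis_eq_card by (rule fsupp_of_nat_card_subset)
  have "cut_parts R ` cuts R \<subseteq> irels \<times> irels"
    using cut_parts_in_irels[OF assms] by (auto simp: cut_parts_def)
  then show ?thesis
    using finite_fsupp_cop_basis order_trans[OF sub] unfolding fs_on_def by simp
qed

lemma cop_in_fs_on:
  assumes "a \<in> fs_on irels"
  shows "cop a \<in> fs_on (irels \<times> irels)"
  unfolding cop_def
  by (rule lin_in_fs_on[OF fs_on_finite[OF assms]]) (rule cop_basis_in_fs_on[OF fs_on_subset[OF assms]])

lemma cop_bas: "cop (bas R) = cop_basis R"
  unfolding cop_def by simp

lemma bas_Pair: "bas (a, b) (x, y) = (bas a x * bas b y :: 'k::comm_semiring_1)"
  unfolding bas_def by auto

lemma coassoc_basis: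
  "lin (\<lambda>(P, Q) (U, V, W). cop_basis P (U, V) * bas Q W) (cop_basis R)
     = (lin (\<lambda>(P, Q) (U, V, W). bas P U * cop_basis Q (V, W)) (cop_basis R) :: _ \<Rightarrow> 'k::comm_semiring_1)"
proof
  fix y :: "irel \<times> irel \<times> irel"
  obtain U V W where y: "y = (U, V, W)" by (cases y)
  let ?g = "\<lambda>P Q S. bas (P, Q, S) (U, V, W) :: 'k"
  have "lin (\<lambda>(P, Q) (U, V, W). cop_basis P (U, V) * bas Q W) (cop_basis R) y
      = (\<Sum>(X, Y)\<in>cuts R. \<Sum>(X1, X2)\<in>cuts (std_restr R X).
           ?g (std_restr (std_restr R X) X1) (std_restr (std_restr R X) X2) (std_restr R Y))"
    unfolding lin_cop_basis y
    by (simp add: cut_parts_def cop_basis_eq_sum sum_distrib_right bas_Pair split_def mult.assoc)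
  also have "\<dots> = (\<Sum>(A, B, C)\<in>cuts3 R. ?g (std_restr R A) (std_restr R B) (std_restr R C))"
    by (rule sum_cuts_cuts_std_restr_left)
  also have "\<dots> = (\<Sum>(X, Y)\<in>cuts R. \<Sum>(Y1, Y2)\<in>cuts (std_restr R Y).
           ?g (std_restr R X) (std_restr (std_restr R Y) Y1) (std_restr (std_restr R Y) Y2))"
    by (rule sum_cuts_cuts_std_restr_right[symmetric])
  also have "\<dots> = lin (\<lambda>(P, Q) (U, V, W). bas P U * cop_basis Q (V, W)) (cop_basis R) y"
    unfolding lin_cop_basis y
    by (simp add: cut_parts_def cop_basis_eq_sum sum_distrib_left bas_Pair split_def)
  finally show "lin (\<lambda>(P, Q) (U, V, W). cop_basis P (U, V) * bas Q W) (cop_basis R) y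
      = (lin (\<lambda>(P, Q) (U, V, W). bas P U * cop_basis Q (V, W)) (cop_basis R) y :: 'k)" .
qed

lemma coassoc:
  assumes "finite (fsupp a)"
  shows "cop_l (cop a) = cop_r (cop a)"
  unfolding cop_l_def cop_r_def cop_def lin_lin[OF assms finite_fsupp_cop_basis] coassoc_basis ..

lemma cop_basis_empty_irel: "cop_basis empty_irel = bas (empty_irel, empty_irel)"
  unfolding cop_basis_eq_sum cuts_empty_irel by (simp add: cut_parts_def)

lemma grading_cop:
  assumes "(cop (bas R) (U, W) :: 'k::comm_semiring_1) \<noteq> 0"
  shows "fst U + fst W = fst R"
proof -
  have "(U, W) \<in> fsupp (cop_basis R :: irel \<times> irel \<Rightarrow> 'k)"
    using assms by (simp add: fsupp_def cop_bas)
  then have "(U, W) \<in> cut_parts R ` cuts R"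
    unfolding cop_basis_eq_card by (rule subsetD[OF fsupp_of_nat_card_subset])
  then obtain c where "c \<in> cuts R" "(U, W) = cut_parts R c" by (rule imageE)
  then show ?thesis
    using card_cut[of c R] by (simp add: cut_parts_def)
qed

lemma counit_left_basis:
  assumes "R \<in> irels"
  shows "lin (\<lambda>(P, Q) W. bas empty_irel P * bas Q W) (cop_basis R) = (bas R :: irel \<Rightarrow> 'k::comm_semiring_1)"
proof
  fix W
  have "lin (\<lambda>(P, Q) W. bas empty_irel P * bas Q W) (cop_basis R) W
      = (\<Sum>c\<in>cuts R. if c = ({}, {1..fst R}) then bas (std_restr R {1..fst R}) W else 0 :: 'k)"
  proof (unfold lin_cop_basis, rule sum.cong[OF refl])
    fix c assume c: "c \<in> cuts R"
    have "std_restr R (fst c) = empty_irel \<longleftrightarrow> c = ({}, {1..fst R})"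
      using finite_cut[OF c] cut_eq_empty_left[OF c]
      by (simp add: std_restr_eq_empty_iff)
    then show "(\<lambda>(P, Q) W. bas empty_irel P * bas Q W) (cut_parts R c) W
        = (if c = ({}, {1..fst R}) then bas (std_restr R {1..fst R}) W else 0 :: 'k)"
      by (auto simp: cut_parts_def bas_def)
  qed
  also have "\<dots> = bas R W"
    using cut_empty_left[of R] std_restr_full[of R "fst R"] assms
    by (simp add: sum.delta[OF finite_cuts] irels_iff_IRel)
  finally show "lin (\<lambda>(P, Q) W. bas empty_irel P * bas Q W) (cop_basis R) W = (bas R W :: 'k)" .
qed

lemma counit_right_basis:
  assumes "R \<in> irels"
  shows "lin (\<lambda>(P, Q) U. bas P U * bas empty_irel Q) (cop_basis R) = (bas R :: irel \<Rightarrow> 'k::comm_semiring_1)"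
proof
  fix U
  have "lin (\<lambda>(P, Q) U. bas P U * bas empty_irel Q) (cop_basis R) U
      = (\<Sum>c\<in>cuts R. if c = ({1..fst R}, {}) then bas (std_restr R {1..fst R}) U else 0 :: 'k)"
  proof (unfold lin_cop_basis, rule sum.cong[OF refl])
    fix c assume c: "c \<in> cuts R"
    have "std_restr R (snd c) = empty_irel \<longleftrightarrow> c = ({1..fst R}, {})"
      using finite_cut[OF c] cut_eq_empty_right[OF c]
      by (simp add: std_restr_eq_empty_iff)
    then show "(\<lambda>(P, Q) U. bas P U * bas empty_irel Q) (cut_parts R c) U
        = (if c = ({1..fst R}, {}) then bas (std_restr R {1..fst R}) U else 0 :: 'k)"
      by (auto simp: cut_parts_def bas_def)
  qed
  also have "\<dots> = bas R U"
    using cut_empty_right[of R] std_restr_full[of R "fst R"] assms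
    by (simp add: sum.delta[OF finite_cuts] irels_iff_IRel)
  finally show "lin (\<lambda>(P, Q) U. bas P U * bas empty_irel Q) (cop_basis R) U = (bas R U :: 'k)" .
qed

lemma counit_left:
  assumes "a \<in> fs_on irels"
  shows "lin (\<lambda>(P, Q) W. bas empty_irel P * bas Q W) (cop a) = a"
proof -
  have "lin (\<lambda>(P, Q) W. bas empty_irel P * bas Q W) (cop a) = lin bas a"
    unfolding cop_def lin_lin[OF fs_on_finite[OF assms] finite_fsupp_cop_basis]
    by (rule lin_cong) (simp add: counit_left_basis fs_on_subset[OF assms])
  then show ?thesis using lin_bas_self[OF fs_on_finite[OF assms]] by simp
qed

lemma counit_right:
  assumes "a \<in> fs_on irels"
  shows "lin (\<lambda>(P, Q) U. bas P U * bas empty_irel Q) (cop a) = a"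
proof -
  have "lin (\<lambda>(P, Q) U. bas P U * bas empty_irel Q) (cop a) = lin bas a"
    unfolding cop_def lin_lin[OF fs_on_finite[OF assms] finite_fsupp_cop_basis]
    by (rule lin_cong) (simp add: counit_right_basis fs_on_subset[OF assms])
  then show ?thesis using lin_bas_self[OF fs_on_finite[OF assms]] by simp
qed

section \<open>Convolution and the antipode\<close>

text \<open>\<open>conv f g R\<close> is the convolution \<open>\<mu> \<circ> (f \<otimes> g) \<circ> \<Delta>\<close> evaluated at the basis element of \<open>R\<close>.\<close>

definition conv :: "(irel \<Rightarrow> irel \<Rightarrow> 'k::comm_semiring_1) \<Rightarrow> (irel \<Rightarrow> irel \<Rightarrow> 'k) \<Rightarrow> irel \<Rightarrow> irel \<Rightarrow> 'k" where
  "conv f g R = (\<lambda>T. \<Sum>c\<in>cuts R. mult (f (std_restr R (fst c))) (g (std_restr R (snd c))) T)"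

definition fs_valued :: "(irel \<Rightarrow> irel \<Rightarrow> 'k::zero) \<Rightarrow> bool" where
  "fs_valued f \<longleftrightarrow> (\<forall>P\<in>irels. f P \<in> fs_on irels)"

lemma lin_conv_cop_basis: "lin (\<lambda>(P, Q). mult (f P) (g Q)) (cop_basis R) = conv f g R"
  unfolding lin_cop_basis conv_def cut_parts_def by (simp add: split_def)

lemma conv_cong:
  assumes "\<And>P. P \<in> irels \<Longrightarrow> f P = f' P" "\<And>P. P \<in> irels \<Longrightarrow> g P = g' P" "R \<in> irels"
  shows "conv f g R = conv f' g' R"
  unfolding conv_def
proof (intro ext sum.cong refl)
  fix T c assume "c \<in> cuts R"
  then have "std_restr R (fst c) \<in> irels" "std_restr R (snd c) \<in> irels"
    using cut_parts_in_irels[OF assms(3)] by simp_all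
  then show "mult (f (std_restr R (fst c))) (g (std_restr R (snd c))) T
      = mult (f' (std_restr R (fst c))) (g' (std_restr R (snd c))) T"
    using assms(1,2) by simp
qed

lemma conv_conv_left:
  assumes f: "fs_valued f" and g: "fs_valued g" and R: "R \<in> irels"
  shows "conv (conv f g) h R T
    = (\<Sum>(A, B, C)\<in>cuts3 R. mult (mult (f (std_restr R A)) (g (std_restr R B))) (h (std_restr R C)) T)"
proof -
  have fin: "finite (fsupp (mult (f P) (g Q)))" if "P \<in> irels" "Q \<in> irels" for P Q
    using that f g unfolding fs_valued_def by (meson fs_on_finite mult_in_fs_on)
  have "conv (conv f g) h R T = (\<Sum>(X, Y)\<in>cuts R. \<Sum>(X1, X2)\<in>cuts (std_restr R X).
     mult (mult (f (std_restr (std_restr R X) X1)) (g (std_restr (std_restr R X) X2))) (h (std_restr R Y)) T)"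
    unfolding conv_def split_def
  proof (rule sum.cong[OF refl])
    fix c assume "c \<in> cuts R"
    then have P: "std_restr R (fst c) \<in> irels" using cut_parts_in_irels[OF R] by simp
    show "mult (\<lambda>T. \<Sum>d\<in>cuts (std_restr R (fst c)). mult (f (std_restr (std_restr R (fst c)) (fst d)))
          (g (std_restr (std_restr R (fst c)) (snd d))) T) (h (std_restr R (snd c))) T
        = (\<Sum>d\<in>cuts (std_restr R (fst c)). mult (mult (f (std_restr (std_restr R (fst c)) (fst d)))
          (g (std_restr (std_restr R (fst c)) (snd d)))) (h (std_restr R (snd c))) T)"
      using cut_parts_in_irels[OF P] fin by (subst mult_sum_left[OF finite_cuts]) simp_all
  qed
  also have "\<dots> = (\<Sum>(A, B, C)\<in>cuts3 R. mult (mult (f (std_restr R A)) (g (std_restr R B))) (h (std_restr R C)) T)"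
    by (rule sum_cuts_cuts_std_restr_left)
  finally show ?thesis .
qed

lemma conv_conv_right:
  assumes g: "fs_valued g" and h: "fs_valued h" and R: "R \<in> irels"
  shows "conv f (conv g h) R T
    = (\<Sum>(A, B, C)\<in>cuts3 R. mult (f (std_restr R A)) (mult (g (std_restr R B)) (h (std_restr R C))) T)"
proof -
  have fin: "finite (fsupp (mult (g P) (h Q)))" if "P \<in> irels" "Q \<in> irels" for P Q
    using that g h unfolding fs_valued_def by (meson fs_on_finite mult_in_fs_on)
  have "conv f (conv g h) R T = (\<Sum>(X, Y)\<in>cuts R. \<Sum>(Y1, Y2)\<in>cuts (std_restr R Y).
     mult (f (std_restr R X)) (mult (g (std_restr (std_restr R Y) Y1)) (h (std_restr (std_restr R Y) Y2))) T)"
    unfolding conv_def split_def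
  proof (rule sum.cong[OF refl])
    fix c assume "c \<in> cuts R"
    then have P: "std_restr R (snd c) \<in> irels" using cut_parts_in_irels[OF R] by simp
    show "mult (f (std_restr R (fst c))) (\<lambda>T. \<Sum>d\<in>cuts (std_restr R (snd c)).
          mult (g (std_restr (std_restr R (snd c)) (fst d))) (h (std_restr (std_restr R (snd c)) (snd d))) T) T
        = (\<Sum>d\<in>cuts (std_restr R (snd c)). mult (f (std_restr R (fst c))) (mult (g (std_restr (std_restr R (snd c)) (fst d)))
          (h (std_restr (std_restr R (snd c)) (snd d)))) T)"
      using cut_parts_in_irels[OF P] fin by (subst mult_sum_right[OF finite_cuts]) simp_all
  qed
  also have "\<dots> = (\<Sum>(A, B, C)\<in>cuts3 R. mult (f (std_restr R A)) (mult (g (std_restr R B)) (h (std_restr R C))) T)"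
    by (rule sum_cuts_cuts_std_restr_right)
  finally show ?thesis .
qed

lemma conv_assoc:
  fixes f g h :: "irel \<Rightarrow> irel \<Rightarrow> 'k::comm_semiring_1"
  assumes f: "fs_valued f" and g: "fs_valued g" and h: "fs_valued h" and R: "R \<in> irels"
  shows "conv (conv f g) h R = conv f (conv g h) R"
proof
  fix T
  have "mult (mult (f (std_restr R A)) (g (std_restr R B))) (h (std_restr R C))
      = mult (f (std_restr R A)) (mult (g (std_restr R B)) (h (std_restr R C)))"
    if "(A, B, C) \<in> cuts3 R" for A B C
  proof -
    have "A \<subseteq> {1..fst R}" "B \<subseteq> {1..fst R}" "C \<subseteq> {1..fst R}"
      using that unfolding cuts3_def by auto
    then have "std_restr R A \<in> irels" "std_restr R B \<in> irels" "std_restr R C \<in> irels"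
      using std_restr_in_irels[OF R] by simp_all
    then show ?thesis
      using f g h unfolding fs_valued_def by (intro mult_assoc fs_on_finite) blast+
  qed
  then show "conv (conv f g) h R T = conv f (conv g h) R T"
    unfolding conv_conv_left[OF f g R] conv_conv_right[OF g h R] by (intro sum.cong refl) auto
qed

text \<open>The composite \<open>\<eta> \<circ> \<epsilon>\<close> of counit and unit, on basis elements.\<close>

definition unit_counit :: "irel \<Rightarrow> irel \<Rightarrow> 'k::zero_neq_one" where
  "unit_counit R = (if R = empty_irel then bas empty_irel else (\<lambda>_. 0))"

lemma fs_valued_bas: "fs_valued (bas :: irel \<Rightarrow> irel \<Rightarrow> 'k::zero_neq_one)"
  unfolding fs_valued_def by (simp add: bas_in_fs_on)

lemma lin_unit_counit: "finite (fsupp a) \<Longrightarrow> lin unit_counit a = (\<lambda>T. a empty_irel * bas empty_irel T)"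
  unfolding unit_counit_def by (rule lin_delta_kernel)

lemma unit_counit_std_restr:
  "c \<in> cuts R \<Longrightarrow> Z = fst c \<or> Z = snd c \<Longrightarrow> unit_counit (std_restr R Z) = (if Z = {} then bas empty_irel else (\<lambda>_. 0))"
  unfolding unit_counit_def using finite_cut std_restr_eq_empty_iff by metis

lemma conv_unit_counit_right:
  assumes f: "fs_valued f" and R: "R \<in> irels"
  shows "conv f unit_counit R = f R"
proof
  fix T
  have "conv f unit_counit R T = (\<Sum>c\<in>cuts R. if c = ({1..fst R}, {}) then f (std_restr R {1..fst R}) T else 0)"
    unfolding conv_def
  proof (rule sum.cong[OF refl])
    fix c assume c: "c \<in> cuts R"
    have "f (std_restr R (fst c)) \<in> fs_on irels"
      using f cut_parts_in_irels[OF R c] by (simp add: fs_valued_def)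
    then show "mult (f (std_restr R (fst c))) (unit_counit (std_restr R (snd c))) T
        = (if c = ({1..fst R}, {}) then f (std_restr R {1..fst R}) T else 0)"
      using c cut_eq_empty_right[OF c]
      by (auto simp: unit_counit_std_restr[OF c] mult_unit_right mult_zero_right)
  qed
  also have "\<dots> = f R T"
    using cut_empty_right[of R] std_restr_full[of R "fst R"] R
    by (simp add: sum.delta[OF finite_cuts] irels_iff_IRel)
  finally show "conv f unit_counit R T = f R T" .
qed

lemma conv_unit_counit_left:
  assumes f: "fs_valued f" and R: "R \<in> irels"
  shows "conv unit_counit f R = f R"
proof
  fix T
  have "conv unit_counit f R T = (\<Sum>c\<in>cuts R. if c = ({}, {1..fst R}) then f (std_restr R {1..fst R}) T else 0)"
    unfolding conv_def
  proof (rule sum.cong[OF refl])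
    fix c assume c: "c \<in> cuts R"
    have "f (std_restr R (snd c)) \<in> fs_on irels"
      using f cut_parts_in_irels[OF R c] by (simp add: fs_valued_def)
    then show "mult (unit_counit (std_restr R (fst c))) (f (std_restr R (snd c))) T
        = (if c = ({}, {1..fst R}) then f (std_restr R {1..fst R}) T else 0)"
      using c cut_eq_empty_left[OF c]
      by (auto simp: unit_counit_std_restr[OF c] mult_unit_left mult_zero_left)
  qed
  also have "\<dots> = f R T"
    using cut_empty_left[of R] std_restr_full[of R "fst R"] R
    by (simp add: sum.delta[OF finite_cuts] irels_iff_IRel)
  finally show "conv unit_counit f R T = f R T" .
qed

text \<open>Takeuchi's recursion: since every proper cut strictly shrinks one side, the relations
  \<open>S * id = \<eta>\<epsilon>\<close> and \<open>id * S = \<eta>\<epsilon>\<close> can be solved for \<open>S R\<close> by induction on the size of \<open>R\<close>.\<close>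

function antipode_l :: "irel \<Rightarrow> irel \<Rightarrow> 'k::comm_ring_1" where
  "antipode_l R = (if fst R = 0 then bas empty_irel
     else (\<lambda>T. - (\<Sum>c\<in>{c\<in>cuts R. snd c \<noteq> {}}. mult (antipode_l (std_restr R (fst c))) (bas (std_restr R (snd c))) T)))"
  by auto
termination
proof (relation "measure fst")
  fix R T c assume c: "c \<in> {c\<in>cuts R. snd c \<noteq> {}}"
  then have "card (snd c) > 0"
    using finite_cut[of c R] by (simp add: card_gt_0_iff)
  then show "(std_restr R (fst c), R) \<in> measure fst"
    using card_cut[of c R] c by simp
qed simp

function antipode_r :: "irel \<Rightarrow> irel \<Rightarrow> 'k::comm_ring_1" where
  "antipode_r R = (if fst R = 0 then bas empty_irel
     else (\<lambda>T. - (\<Sum>c\<in>{c\<in>cuts R. fst c \<noteq> {}}. mult (bas (std_restr R (fst c))) (antipode_r (std_restr R (snd c))) T)))"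
  by auto
termination
proof (relation "measure fst")
  fix R T c assume c: "c \<in> {c\<in>cuts R. fst c \<noteq> {}}"
  then have "card (fst c) > 0"
    using finite_cut[of c R] by (simp add: card_gt_0_iff)
  then show "(std_restr R (snd c), R) \<in> measure fst"
    using card_cut[of c R] c by simp
qed simp

declare antipode_l.simps [simp del] antipode_r.simps [simp del]

lemma antipode_l_in_fs_on: "R \<in> irels \<Longrightarrow> (antipode_l R :: irel \<Rightarrow> 'k::comm_ring_1) \<in> fs_on irels"
proof (induction R rule: antipode_l.induct)
  case (1 R)
  show ?case
  proof (cases "fst R = 0")
    case True
    then show ?thesis by (subst antipode_l.simps) (simp add: bas_in_fs_on empty_irel_in_irels)
  next
    case False
    have "mult (antipode_l (std_restr R (fst c)) :: irel \<Rightarrow> 'k) (bas (std_restr R (snd c))) \<in> fs_on irels"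
      if c: "c \<in> {c\<in>cuts R. snd c \<noteq> {}}" for c
    proof -
      have irels: "std_restr R (fst c) \<in> irels" "std_restr R (snd c) \<in> irels"
        using cut_parts_in_irels[OF "1.prems"] c by simp_all
      show ?thesis
        by (rule mult_in_fs_on, rule "1.IH"[OF False c irels(1)], rule bas_in_fs_on[OF irels(2)])
    qed
    then have "(\<lambda>T. \<Sum>c\<in>{c\<in>cuts R. snd c \<noteq> {}}. mult (antipode_l (std_restr R (fst c)) :: irel \<Rightarrow> 'k) (bas (std_restr R (snd c))) T)
        \<in> fs_on irels"
      by (intro sum_in_fs_on) (simp_all add: finite_cuts)
    then show ?thesis using False by (subst antipode_l.simps) (simp add: uminus_in_fs_on)
  qed
qed

lemma antipode_r_in_fs_on: "R \<in> irels \<Longrightarrow> (antipode_r R :: irel \<Rightarrow> 'k::comm_ring_1) \<in> fs_on irels"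
proof (induction R rule: antipode_r.induct)
  case (1 R)
  show ?case
  proof (cases "fst R = 0")
    case True
    then show ?thesis by (subst antipode_r.simps) (simp add: bas_in_fs_on empty_irel_in_irels)
  next
    case False
    have "mult (bas (std_restr R (fst c))) (antipode_r (std_restr R (snd c)) :: irel \<Rightarrow> 'k) \<in> fs_on irels"
      if c: "c \<in> {c\<in>cuts R. fst c \<noteq> {}}" for c
    proof -
      have irels: "std_restr R (fst c) \<in> irels" "std_restr R (snd c) \<in> irels"
        using cut_parts_in_irels[OF "1.prems"] c by simp_all
      show ?thesis
        by (rule mult_in_fs_on, rule bas_in_fs_on[OF irels(1)], rule "1.IH"[OF False c irels(2)])
    qed
    then have "(\<lambda>T. \<Sum>c\<in>{c\<in>cuts R. fst c \<noteq> {}}. mult (bas (std_restr R (fst c))) (antipode_r (std_restr R (snd c)) :: irel \<Rightarrow> 'k) T)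
        \<in> fs_on irels"
      by (intro sum_in_fs_on) (simp_all add: finite_cuts)
    then show ?thesis using False by (subst antipode_r.simps) (simp add: uminus_in_fs_on)
  qed
qed

lemma sum_cuts_remove:
  assumes "d \<in> cuts R" "\<And>c. c \<in> cuts R \<Longrightarrow> c \<noteq> d \<longleftrightarrow> P c"
  shows "(\<Sum>c\<in>cuts R. F c) = F d + (\<Sum>c\<in>{c\<in>cuts R. P c}. F c)"
proof -
  have "{c\<in>cuts R. P c} = cuts R - {d}" using assms(2) by auto
  then show ?thesis using sum.remove[OF finite_cuts assms(1), of F] by simp
qed

lemma conv_antipode_l_bas:
  assumes R: "R \<in> irels"
  shows "conv antipode_l bas R = (unit_counit R :: irel \<Rightarrow> 'k::comm_ring_1)"
proof (cases "fst R = 0")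
  case True
  then have R0: "R = empty_irel" using irels_size_0 R by blast
  have "(antipode_l empty_irel :: irel \<Rightarrow> 'k) = bas empty_irel"
    by (subst antipode_l.simps) (simp add: empty_irel_def)
  then have "conv antipode_l bas empty_irel = (mult (bas empty_irel) (bas empty_irel) :: irel \<Rightarrow> 'k)"
    unfolding conv_def by (simp add: cuts_empty_irel)
  then show ?thesis
    using R0 by (simp add: mult_bas_bas unit_counit_def mult_basis_empty_irel_left empty_irel_in_irels)
next
  case False
  show ?thesis
  proof
    fix T
    let ?S = "\<Sum>c\<in>{c\<in>cuts R. snd c \<noteq> {}}. mult (antipode_l (std_restr R (fst c))) (bas (std_restr R (snd c))) T :: 'k"
    have "conv antipode_l bas R T = mult (antipode_l (std_restr R {1..fst R})) (bas (std_restr R {})) T + ?S"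
      unfolding conv_def
      by (subst sum_cuts_remove[where d = "({1..fst R}, {})"])
        (use cut_empty_right[of R] in \<open>simp_all add: cut_eq_empty_right\<close>)
    also have "\<dots> = antipode_l R T + ?S"
      using std_restr_full[of R "fst R"] R mult_unit_right[OF antipode_l_in_fs_on[OF R, where 'k='k]]
      by (simp add: irels_iff_IRel)
    also have "antipode_l R T = - ?S" using False by (subst antipode_l.simps) simp
    moreover have "R \<noteq> empty_irel" using False by (auto simp: empty_irel_def)
    ultimately show "conv antipode_l bas R T = (unit_counit R T :: 'k)"
      by (simp add: unit_counit_def)
  qed
qed

lemma conv_bas_antipode_r:
  assumes R: "R \<in> irels"
  shows "conv bas antipode_r R = (unit_counit R :: irel \<Rightarrow> 'k::comm_ring_1)"
proof (cases "fst R = 0")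
  case True
  then have R0: "R = empty_irel" using irels_size_0 R by blast
  have "(antipode_r empty_irel :: irel \<Rightarrow> 'k) = bas empty_irel"
    by (subst antipode_r.simps) (simp add: empty_irel_def)
  then have "conv bas antipode_r empty_irel = (mult (bas empty_irel) (bas empty_irel) :: irel \<Rightarrow> 'k)"
    unfolding conv_def by (simp add: cuts_empty_irel)
  then show ?thesis
    using R0 by (simp add: mult_bas_bas unit_counit_def mult_basis_empty_irel_left empty_irel_in_irels)
next
  case False
  show ?thesis
  proof
    fix T
    let ?S = "\<Sum>c\<in>{c\<in>cuts R. fst c \<noteq> {}}. mult (bas (std_restr R (fst c))) (antipode_r (std_restr R (snd c))) T :: 'k"
    have "conv bas antipode_r R T = mult (bas (std_restr R {})) (antipode_r (std_restr R {1..fst R})) T + ?S"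
      unfolding conv_def
      by (subst sum_cuts_remove[where d = "({}, {1..fst R})"])
        (use cut_empty_left[of R] in \<open>simp_all add: cut_eq_empty_left\<close>)
    also have "\<dots> = antipode_r R T + ?S"
      using std_restr_full[of R "fst R"] R mult_unit_left[OF antipode_r_in_fs_on[OF R, where 'k='k]]
      by (simp add: irels_iff_IRel)
    also have "antipode_r R T = - ?S" using False by (subst antipode_r.simps) simp
    moreover have "R \<noteq> empty_irel" using False by (auto simp: empty_irel_def)
    ultimately show "conv bas antipode_r R T = (unit_counit R T :: 'k)"
      by (simp add: unit_counit_def)
  qed
qed

text \<open>As in any monoid, a left and a right inverse (here of \<open>bas\<close> under convolution) coincide.\<close>

lemma antipode_l_eq_antipode_r:
  assumes R: "R \<in> irels"
  shows "antipode_l R = antipode_r R"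
proof -
  have l: "fs_valued antipode_l" and r: "fs_valued antipode_r"
    unfolding fs_valued_def using antipode_l_in_fs_on antipode_r_in_fs_on by blast+
  have "antipode_l R = conv antipode_l unit_counit R"
    by (rule conv_unit_counit_right[OF l R, symmetric])
  also have "\<dots> = conv antipode_l (conv bas antipode_r) R"
    by (rule conv_cong[OF refl _ R]) (rule conv_bas_antipode_r[symmetric])
  also have "\<dots> = conv (conv antipode_l bas) antipode_r R"
    by (rule conv_assoc[symmetric, OF l fs_valued_bas r R])
  also have "\<dots> = conv unit_counit antipode_r R"
    by (rule conv_cong[OF _ refl R]) (rule conv_antipode_l_bas)
  also have "\<dots> = antipode_r R"
    by (rule conv_unit_counit_left[OF r R])
  finally show ?thesis .
qed

lemma lin_cop_eq_unit_counit:
  assumes "a \<in> fs_on irels" "\<And>R. R \<in> irels \<Longrightarrow> conv f g R = unit_counit R"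
  shows "lin (\<lambda>(P, Q). mult (f P) (g Q)) (cop a) = (\<lambda>T. a empty_irel * bas empty_irel T)"
proof -
  have "lin (\<lambda>(P, Q). mult (f P) (g Q)) (cop a) = lin unit_counit a"
    unfolding cop_def lin_lin[OF fs_on_finite[OF assms(1)] finite_fsupp_cop_basis] lin_conv_cop_basis
    by (rule lin_cong) (simp add: assms(2) fs_on_subset[OF assms(1)])
  then show ?thesis by (simp add: lin_unit_counit fs_on_finite[OF assms(1)])
qed

lemma conv_bas_antipode_l:
  assumes R: "R \<in> irels"
  shows "conv bas antipode_l R = (unit_counit R :: irel \<Rightarrow> 'k::comm_ring_1)"
proof -
  have "conv bas antipode_l R = (conv bas antipode_r R :: irel \<Rightarrow> 'k)"
    by (rule conv_cong[OF refl antipode_l_eq_antipode_r R])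
  then show ?thesis using conv_bas_antipode_r[OF R] by simp
qed

lemma antipode_left:
  "a \<in> fs_on irels \<Longrightarrow> lin (\<lambda>(P, Q). mult (antipode_l P) (bas Q)) (cop a) = (\<lambda>T. a empty_irel * bas empty_irel T)"
  by (rule lin_cop_eq_unit_counit) (simp_all add: conv_antipode_l_bas)

lemma antipode_right:
  "a \<in> fs_on irels \<Longrightarrow> lin (\<lambda>(P, Q). mult (bas P) (antipode_l Q)) (cop a) = (\<lambda>T. a empty_irel * bas empty_irel T)"
  by (rule lin_cop_eq_unit_counit) (simp_all add: conv_bas_antipode_l)

lemma counit_antipode_exist:
  "\<exists>c :: irel \<Rightarrow> 'k::comm_ring_1. \<exists>s :: irel \<Rightarrow> irel \<Rightarrow> 'k.
     let eps = (\<lambda>a :: irel \<Rightarrow> 'k. \<Sum>x\<in>fsupp a. a x * c x) in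
       (\<forall>R\<in>irels. c R \<noteq> 0 \<longrightarrow> fst R = 0)
     \<and> (\<forall>a\<in>fs_on irels. lin (\<lambda>(P, Q) W. c P * bas Q W) (cop a) = a
                      \<and> lin (\<lambda>(P, Q) U. bas P U * c Q) (cop a) = a)
     \<and> (\<forall>a\<in>fs_on irels. \<forall>b\<in>fs_on irels. eps (mult a b) = eps a * eps b)
     \<and> eps (bas empty_irel) = 1
     \<and> (\<forall>R\<in>irels. s R \<in> fs_on irels)
     \<and> (\<forall>a\<in>fs_on irels. lin (\<lambda>(P, Q). mult (s P) (bas Q)) (cop a) = (\<lambda>T. eps a * bas empty_irel T)
                      \<and> lin (\<lambda>(P, Q). mult (bas P) (s Q)) (cop a) = (\<lambda>T. eps a * bas empty_irel T))"
proof -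
  let ?eps = "\<lambda>a :: irel \<Rightarrow> 'k. \<Sum>x\<in>fsupp a. a x * bas empty_irel x"
  have eps: "?eps a = a empty_irel" if "a \<in> fs_on irels" for a
    by (rule sum_times_bas[OF fs_on_finite[OF that]])
  have graded: "\<forall>R\<in>irels. bas empty_irel R \<noteq> (0::'k) \<longrightarrow> fst R = 0"
    by (simp add: bas_def empty_irel_def)
  have counit: "\<forall>a\<in>fs_on irels. lin (\<lambda>(P, Q) W. bas empty_irel P * bas Q W) (cop a) = a
      \<and> lin (\<lambda>(P, Q) U. bas P U * bas empty_irel Q) (cop a) = (a :: irel \<Rightarrow> 'k)"
    by (simp add: counit_left counit_right)
  have eps_mult: "\<forall>a\<in>fs_on irels. \<forall>b\<in>fs_on irels. ?eps (mult a b) = ?eps a * ?eps b"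
    by (simp add: eps mult_in_fs_on mult_at_empty_irel)
  have eps_unit: "?eps (bas empty_irel) = 1"
    using eps[OF bas_in_fs_on[OF empty_irel_in_irels]] by (simp add: bas_def)
  have antipode: "\<forall>a\<in>fs_on irels.
      lin (\<lambda>(P, Q). mult (antipode_l P) (bas Q)) (cop a) = (\<lambda>T. ?eps a * bas empty_irel T)
    \<and> lin (\<lambda>(P, Q). mult (bas P) (antipode_l Q)) (cop a) = (\<lambda>T. ?eps a * bas empty_irel T)"
    by (simp add: eps antipode_left antipode_right)
  have antipode_fs: "\<forall>R\<in>irels. (antipode_l R :: irel \<Rightarrow> 'k) \<in> fs_on irels"
    by (simp add: antipode_l_in_fs_on)
  show ?thesis
    unfolding Let_def
    by (intro exI[of _ "bas empty_irel"] exI[of _ antipode_l] conjI)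
      (fact graded counit eps_mult eps_unit antipode_fs antipode)+
qed

section \<open>Compatibility of product and coproduct\<close>

definition block :: "nat \<Rightarrow> nat \<Rightarrow> nat set \<Rightarrow> nat set" where
  "block a k Z = {i\<in>{1..k}. i + a \<in> Z}"

lemma block_subset: "block a k Z \<subseteq> {1..k}"
  by (auto simp: block_def)

lemma block_cut:
  assumes T: "T \<in> IRel N" and c: "(Z1, Z2) \<in> cuts T" and "a + k \<le> N"
  shows "(block a k Z1, block a k Z2) \<in> cuts (std_restr T {a+1..a+k})"
proof -
  have d: "Z1 \<inter> Z2 = {}" "Z1 \<union> Z2 = {1..N}" and p: "strictly_precedes (snd T) Z1 Z2"
    using c T by (simp_all add: mem_cuts IRel_iff)
  have "block a k Z1 \<inter> block a k Z2 = {}"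
    using d(1) by (auto simp: block_def)
  moreover have "block a k Z1 \<union> block a k Z2 = {1..k}"
  proof (intro set_eqI iffI)
    fix i assume i: "i \<in> {1..k}"
    then have "i + a \<in> Z1 \<or> i + a \<in> Z2" using assms(3) d(2) by auto
    then show "i \<in> block a k Z1 \<union> block a k Z2" using i by (auto simp: block_def)
  qed (auto simp: block_def)
  moreover have "strictly_precedes (pull_rel k (\<lambda>i. i + a) (snd T)) (block a k Z1) (block a k Z2)"
    using p by (auto simp: strictly_precedes_def pull_rel_def block_def)
  ultimately show ?thesis
    unfolding std_restr_shifted_interval mem_cuts by simp
qed

lemma block_decomp:
  assumes "Z \<subseteq> {1..n + m}"
  shows "Z = block 0 n Z \<union> (\<lambda>i. i + n) ` block n m Z"
proof (intro set_eqI iffI)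
  fix z assume z: "z \<in> Z"
  show "z \<in> block 0 n Z \<union> (\<lambda>i. i + n) ` block n m Z"
  proof (cases "z \<le> n")
    case True
    then show ?thesis using z assms by (auto simp: block_def)
  next
    case False
    then have "z - n \<in> block n m Z" "z = (z - n) + n"
      using z assms by (auto simp: block_def)
    then show ?thesis by (intro UnI2 image_eqI)
  qed
qed (auto simp: block_def)

lemma block_Un_shift:
  fixes X X' :: "nat set"
  assumes "X \<subseteq> {1..n}" "X' \<subseteq> {1..m}"
  shows "block 0 n (X \<union> (\<lambda>i. i + n) ` X') = X" and "block n m (X \<union> (\<lambda>i. i + n) ` X') = X'"
  using assms by (auto simp: block_def)

lemma shift_less:
  fixes X X' :: "nat set"
  assumes "X \<subseteq> {1..n}" "X' \<subseteq> {1..m}"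
  shows "\<forall>x\<in>X. \<forall>y\<in>(\<lambda>i. i + n) ` X'. x < y"
proof (intro ballI)
  fix x y assume "x \<in> X" "y \<in> (\<lambda>i. i + n) ` X'"
  then obtain i where "i \<in> X'" "y = i + n" "x \<le> n" using assms(1) by auto
  moreover have "1 \<le> i" using \<open>i \<in> X'\<close> assms(2) by auto
  ultimately show "x < y" by simp
qed

lemma card_shift: "card ((\<lambda>i. i + n) ` X) = card (X :: nat set)"
  by (rule card_image) (simp add: inj_on_def)

lemma std_restr_in_shsh_blocks:
  assumes T: "T \<in> shsh R S" and Z: "Z \<subseteq> {1..fst R + fst S}"
  shows "std_restr T Z \<in> shsh (std_restr R (block 0 (fst R) Z)) (std_restr S (block (fst R) (fst S) Z))"
proof -
  let ?n = "fst R" and ?m = "fst S"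
  let ?X = "block 0 ?n Z" and ?X' = "block ?n ?m Z"
  have TI: "T \<in> IRel (?n + ?m)" and R: "std_restr T {1..?n} = R" and S: "std_restr T {?n + 1..?n + ?m} = S"
    using T unfolding shsh_iff_std_restr by simp_all
  have X: "?X \<subseteq> {1..?n}" and X': "?X' \<subseteq> {1..?m}"
    by (rule block_subset)+
  have fin: "finite ?X" "finite ((\<lambda>i. i + ?n) ` ?X')"
    using finite_subset[OF X] finite_subset[OF X'] by simp_all
  have Z_eq: "Z = ?X \<union> (\<lambda>i. i + ?n) ` ?X'"
    by (rule block_decomp[OF Z])
  note less = shift_less[OF X X']
  have "card Z = card (?X \<union> (\<lambda>i. i + ?n) ` ?X')"
    by (rule arg_cong[OF Z_eq])
  also have "\<dots> = card ?X + card ?X'"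
    using fin less by (subst card_Un_disjoint) (auto simp: card_shift)
  finally have "std_restr T Z \<in> IRel (card ?X + card ?X')"
    using std_restr_in_IRel[OF TI Z] by simp
  moreover have "std_restr (std_restr T Z) {1..card ?X} = std_restr R ?X"
    using std_restr_std_restr_Un(1)[OF fin less, of T, folded Z_eq]
      std_restr_std_restr_shifted_interval[OF X, of T 0] R by simp
  moreover have "std_restr (std_restr T Z) {card ?X + 1..card ?X + card ?X'} = std_restr S ?X'"
    using std_restr_std_restr_Un(2)[OF fin less, of T, folded Z_eq]
      std_restr_std_restr_shifted_interval[OF X', of T ?n] S by (simp add: card_shift)
  ultimately show ?thesis
    unfolding shsh_iff_std_restr by simp
qed

lemma shsh_cut_blocks:
  assumes T: "T \<in> shsh R S" and c: "(Z1, Z2) \<in> cuts T"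
  shows "(block 0 (fst R) Z1, block 0 (fst R) Z2) \<in> cuts R"
    and "(block (fst R) (fst S) Z1, block (fst R) (fst S) Z2) \<in> cuts S"
    and "std_restr T Z1 \<in> shsh (std_restr R (block 0 (fst R) Z1)) (std_restr S (block (fst R) (fst S) Z1))"
    and "std_restr T Z2 \<in> shsh (std_restr R (block 0 (fst R) Z2)) (std_restr S (block (fst R) (fst S) Z2))"
proof -
  have TI: "T \<in> IRel (fst R + fst S)" and R: "std_restr T {1..fst R} = R"
    and S: "std_restr T {fst R + 1..fst R + fst S} = S"
    using T unfolding shsh_iff_std_restr by simp_all
  show "(block 0 (fst R) Z1, block 0 (fst R) Z2) \<in> cuts R"
    using block_cut[OF TI c, of 0 "fst R"] R by simp
  show "(block (fst R) (fst S) Z1, block (fst R) (fst S) Z2) \<in> cuts S"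
    using block_cut[OF TI c, of "fst R" "fst S"] S by simp
  have "Z1 \<subseteq> {1..fst R + fst S}" "Z2 \<subseteq> {1..fst R + fst S}"
    using cut_subset[OF c] TI by (simp_all add: IRel_iff)
  then show "std_restr T Z1 \<in> shsh (std_restr R (block 0 (fst R) Z1)) (std_restr S (block (fst R) (fst S) Z1))"
    and "std_restr T Z2 \<in> shsh (std_restr R (block 0 (fst R) Z2)) (std_restr S (block (fst R) (fst S) Z2))"
    using std_restr_in_shsh_blocks[OF T] by simp_all
qed

lemma std_restr_blocks_of_shsh:
  fixes X X' :: "nat set"
  assumes X: "X \<subseteq> {1..n}" and X': "X' \<subseteq> {1..m}"
    and T1: "std_restr T (X \<union> (\<lambda>i. i + n) ` X') \<in> shsh (std_restr R X) (std_restr S X')"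
  shows "std_restr T X = std_restr R X" and "std_restr T ((\<lambda>i. i + n) ` X') = std_restr S X'"
proof -
  have fin: "finite X" "finite ((\<lambda>i. i + n) ` X')"
    using finite_subset[OF X] finite_subset[OF X'] by simp_all
  note parts = std_restr_std_restr_Un[OF fin shift_less[OF X X'], of T]
  show "std_restr T X = std_restr R X"
    using T1 parts(1) unfolding shsh_iff_std_restr by simp
  show "std_restr T ((\<lambda>i. i + n) ` X') = std_restr S X'"
    using T1 parts(2) unfolding shsh_iff_std_restr by (simp add: card_shift)
qed

lemma std_restr_block_eq:
  assumes T: "T \<in> IRel N" and c: "(Z1, Z2) \<in> cuts T" and "a + k \<le> N"
    and P: "P \<in> IRel k" and cP: "(block a k Z1, block a k Z2) \<in> cuts P"
    and "std_restr T ((\<lambda>i. i + a) ` block a k Z1) = std_restr P (block a k Z1)"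
    and "std_restr T ((\<lambda>i. i + a) ` block a k Z2) = std_restr P (block a k Z2)"
  shows "std_restr T {a+1..a+k} = P"
proof (rule IRel_eq_by_cut[OF _ P block_cut[OF T c assms(3)] cP])
  show "std_restr T {a+1..a+k} \<in> IRel k"
    using std_restr_in_IRel[OF T, of "{a+1..a+k}"] assms(3) by simp
  show "std_restr (std_restr T {a+1..a+k}) (block a k Z1) = std_restr P (block a k Z1)"
    by (subst std_restr_std_restr_shifted_interval[OF block_subset]) (rule assms(6))
  show "std_restr (std_restr T {a+1..a+k}) (block a k Z2) = std_restr P (block a k Z2)"
    by (subst std_restr_std_restr_shifted_interval[OF block_subset]) (rule assms(7))
qed

lemma glue_cuts_in_shsh:
  assumes R: "R \<in> irels" and S: "S \<in> irels"
    and c: "(X, Y) \<in> cuts R" and d: "(X', Y') \<in> cuts S"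
    and T1: "T1 \<in> shsh (std_restr R X) (std_restr S X')"
    and T2: "T2 \<in> shsh (std_restr R Y) (std_restr S Y')"
  defines "Z1 \<equiv> X \<union> (\<lambda>i. i + fst R) ` X'" and "Z2 \<equiv> Y \<union> (\<lambda>i. i + fst R) ` Y'"
  defines "T \<equiv> (fst R + fst S, glue Z1 Z2 (snd T1) (snd T2))"
  shows "T \<in> shsh R S" and "(Z1, Z2) \<in> cuts T" and "std_restr T Z1 = T1" and "std_restr T Z2 = T2"
proof -
  let ?n = "fst R" and ?m = "fst S" and ?sh = "\<lambda>A. (\<lambda>i. i + fst R) ` A"
  have sub: "X \<subseteq> {1..?n}" "Y \<subseteq> {1..?n}" "X' \<subseteq> {1..?m}" "Y' \<subseteq> {1..?m}"
    using cut_subset[OF c] cut_subset[OF d] by simp_all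
  have dc: "X \<inter> Y = {}" "X \<union> Y = {1..?n}" and dd: "X' \<inter> Y' = {}" "X' \<union> Y' = {1..?m}"
    using c d by (simp_all add: mem_cuts)
  have fin: "finite X" "finite Y" "finite (?sh X')" "finite (?sh Y')"
    using finite_subset[OF sub(1)] finite_subset[OF sub(2)] finite_subset[OF sub(3)] finite_subset[OF sub(4)]
    by simp_all
  have D1: "Z1 \<inter> Z2 = {}"
    using dc(1) dd(1) shift_less[OF sub(1) sub(4)] shift_less[OF sub(2) sub(3)]
    unfolding Z1_def Z2_def by fastforce
  have "Z1 \<union> Z2 = (X \<union> Y) \<union> ?sh (X' \<union> Y')"
    unfolding Z1_def Z2_def by auto
  also have "\<dots> = {1..?n + ?m}"
    unfolding dc dd by (auto simp: image_iff intro!: bexI[where x = "_ - fst R"])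
  finally have D2: "Z1 \<union> Z2 = {1..?n + ?m}" .
  have card_Z: "card Z1 = card X + card X'" "card Z2 = card Y + card Y'"
    using fin shift_less[OF sub(1) sub(3)] shift_less[OF sub(2) sub(4)]
    unfolding Z1_def Z2_def by (subst card_Un_disjoint; fastforce simp: card_shift)+
  have I1: "T1 \<in> IRel (card Z1)" and I2: "T2 \<in> IRel (card Z2)"
    using subsetD[OF shsh_subset_IRel T1] subsetD[OF shsh_subset_IRel T2] card_Z by simp_all
  note g = glue_props[OF D1 D2 I1 I2, folded T_def]
  show "(Z1, Z2) \<in> cuts T" "std_restr T Z1 = T1" "std_restr T Z2 = T2"
    by (fact g(2), fact g(3), fact g(4))
  have blocks: "block 0 ?n Z1 = X" "block 0 ?n Z2 = Y" "block ?n ?m Z1 = X'" "block ?n ?m Z2 = Y'"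
    unfolding Z1_def Z2_def using block_Un_shift sub by simp_all
  have parts1: "std_restr T X = std_restr R X" "std_restr T (?sh X') = std_restr S X'"
    using std_restr_blocks_of_shsh[OF sub(1) sub(3)] T1 g(3) unfolding Z1_def by simp_all
  have parts2: "std_restr T Y = std_restr R Y" "std_restr T (?sh Y') = std_restr S Y'"
    using std_restr_blocks_of_shsh[OF sub(2) sub(4)] T2 g(4) unfolding Z2_def by simp_all
  have "std_restr T {0+1..0+?n} = R"
    using R c parts1(1) parts2(1) blocks
    by (intro std_restr_block_eq[OF g(1) g(2)]) (simp_all add: irels_iff_IRel)
  moreover have "std_restr T {?n+1..?n+?m} = S"
    using S d parts1(2) parts2(2) blocks
    by (intro std_restr_block_eq[OF g(1) g(2)]) (simp_all add: irels_iff_IRel)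
  ultimately show "T \<in> shsh R S"
    unfolding shsh_iff_std_restr using g(1) by simp
qed

text \<open>A shuffle \<open>T\<close> of \<open>R\<close> and \<open>S\<close> together with a cut of \<open>T\<close> amounts to a cut of \<open>R\<close>,
  a cut of \<open>S\<close>, and a shuffle of the two left parts and of the two right parts.\<close>

definition split_cut :: "nat \<Rightarrow> nat \<Rightarrow> irel \<times> nat set \<times> nat set
    \<Rightarrow> (nat set \<times> nat set) \<times> (nat set \<times> nat set) \<times> irel \<times> irel" where
  "split_cut n m = (\<lambda>(T, Z1, Z2). ((block 0 n Z1, block 0 n Z2), (block n m Z1, block n m Z2),
     (std_restr T Z1, std_restr T Z2)))"

definition glue_cut :: "nat \<Rightarrow> nat \<Rightarrow> (nat set \<times> nat set) \<times> (nat set \<times> nat set) \<times> irel \<times> irel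
    \<Rightarrow> irel \<times> nat set \<times> nat set" where
  "glue_cut n m = (\<lambda>((X, Y), (X', Y'), (T1, T2)).
     let Z1 = X \<union> (\<lambda>i. i + n) ` X'; Z2 = Y \<union> (\<lambda>i. i + n) ` Y'
     in ((n + m, glue Z1 Z2 (snd T1) (snd T2)), (Z1, Z2)))"

definition cut_data :: "irel \<Rightarrow> irel \<Rightarrow> ((nat set \<times> nat set) \<times> (nat set \<times> nat set) \<times> irel \<times> irel) set" where
  "cut_data R S = Sigma (cuts R) (\<lambda>c. Sigma (cuts S) (\<lambda>d.
     shsh (std_restr R (fst c)) (std_restr S (fst d)) \<times> shsh (std_restr R (snd c)) (std_restr S (snd d))))"

lemma bij_betw_split_cut:
  assumes R: "R \<in> irels" and S: "S \<in> irels"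
  shows "bij_betw (split_cut (fst R) (fst S)) (Sigma (shsh R S) cuts) (cut_data R S)"
proof -
  let ?n = "fst R" and ?m = "fst S"
  have left: "glue_cut ?n ?m (split_cut ?n ?m a) = a \<and> split_cut ?n ?m a \<in> cut_data R S"
    if a_in: "a \<in> Sigma (shsh R S) cuts" for a
  proof -
    obtain T c0 where T: "T \<in> shsh R S" and c0: "c0 \<in> cuts T" and a0: "a = (T, c0)"
      by (rule SigmaE[OF a_in])
    obtain Z1 Z2 where c0_eq: "c0 = (Z1, Z2)" by (cases c0)
    have a: "a = (T, Z1, Z2)" and c: "(Z1, Z2) \<in> cuts T"
      using a0 c0 c0_eq by simp_all
    have TI: "T \<in> IRel (?n + ?m)" using subsetD[OF shsh_subset_IRel T] by simp
    have Z: "Z1 \<subseteq> {1..?n + ?m}" "Z2 \<subseteq> {1..?n + ?m}"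
      using cut_subset[OF c] TI by (simp_all add: IRel_iff)
    show ?thesis
      using glue_std_restr[OF TI c] TI block_decomp[OF Z(1)] block_decomp[OF Z(2)] shsh_cut_blocks[OF T c]
      unfolding a split_cut_def glue_cut_def cut_data_def by (simp add: IRel_iff prod_eq_iff Let_def)
  qed
  have right: "split_cut ?n ?m (glue_cut ?n ?m b) = b \<and> glue_cut ?n ?m b \<in> Sigma (shsh R S) cuts"
    if b_in: "b \<in> cut_data R S" for b
  proof -
    obtain X Y X' Y' T1 T2 where b: "b = ((X, Y), (X', Y'), (T1, T2))"
      and c: "(X, Y) \<in> cuts R" and d: "(X', Y') \<in> cuts S"
      and T1: "T1 \<in> shsh (std_restr R X) (std_restr S X')"
      and T2: "T2 \<in> shsh (std_restr R Y) (std_restr S Y')"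
      using b_in unfolding cut_data_def by auto
    have sub: "X \<subseteq> {1..?n}" "Y \<subseteq> {1..?n}" "X' \<subseteq> {1..?m}" "Y' \<subseteq> {1..?m}"
      using cut_subset[OF c] cut_subset[OF d] by simp_all
    show ?thesis
      using glue_cuts_in_shsh[OF R S c d T1 T2] block_Un_shift[OF sub(1) sub(3)] block_Un_shift[OF sub(2) sub(4)]
      unfolding b glue_cut_def split_cut_def by (simp add: Let_def)
  qed
  show ?thesis
    by (rule bij_betw_byWitness[where f' = "glue_cut ?n ?m"]) (use left right in blast)+
qed

lemma sum_shsh_cuts:
  assumes R: "R \<in> irels" and S: "S \<in> irels"
  shows "(\<Sum>T\<in>shsh R S. \<Sum>c\<in>cuts T. g (cut_parts T c))
    = (\<Sum>c\<in>cuts R. \<Sum>d\<in>cuts S. \<Sum>T1\<in>shsh (std_restr R (fst c)) (std_restr S (fst d)).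
         \<Sum>T2\<in>shsh (std_restr R (snd c)) (std_restr S (snd d)). g (T1, T2))"
proof -
  have "(\<Sum>T\<in>shsh R S. \<Sum>c\<in>cuts T. g (cut_parts T c)) = (\<Sum>(T, c)\<in>Sigma (shsh R S) cuts. g (cut_parts T c))"
    by (rule sum.Sigma) (simp_all add: finite_shsh finite_cuts)
  also have "\<dots> = (\<Sum>a\<in>Sigma (shsh R S) cuts. (\<lambda>(c, d, T1, T2). g (T1, T2)) (split_cut (fst R) (fst S) a))"
    by (intro sum.cong refl) (auto simp: split_cut_def cut_parts_def)
  also have "\<dots> = (\<Sum>(c, d, T1, T2)\<in>cut_data R S. g (T1, T2))"
    by (rule sum.reindex_bij_betw[OF bij_betw_split_cut[OF R S]])
  also have "\<dots> = (\<Sum>c\<in>cuts R. \<Sum>d\<in>cuts S. \<Sum>T1\<in>shsh (std_restr R (fst c)) (std_restr S (fst d)).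
         \<Sum>T2\<in>shsh (std_restr R (snd c)) (std_restr S (snd d)). g (T1, T2))"
    unfolding cut_data_def
    by (simp add: sum.Sigma[symmetric] sum.cartesian_product' finite_cuts finite_shsh)
  finally show ?thesis .
qed

lemma mult_basis_times_mult_basis:
  "(mult_basis P P' U * mult_basis Q Q' V :: 'k::comm_semiring_1)
     = (\<Sum>T1\<in>shsh P P'. \<Sum>T2\<in>shsh Q Q'. bas (T1, T2) (U, V))"
proof -
  have "(\<Sum>T1\<in>shsh P P'. \<Sum>T2\<in>shsh Q Q'. bas (T1, T2) (U, V) :: 'k)
      = (\<Sum>T1\<in>shsh P P'. bas T1 U) * (\<Sum>T2\<in>shsh Q Q'. bas T2 V)"
    by (simp add: bas_Pair sum_product)
  also have "(\<Sum>T1\<in>shsh P P'. bas T1 U :: 'k) = mult_basis P P' U"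
    unfolding bas_def mult_basis_def by (simp add: sum.delta'[OF finite_shsh])
  also have "(\<Sum>T2\<in>shsh Q Q'. bas T2 V :: 'k) = mult_basis Q Q' V"
    unfolding bas_def mult_basis_def by (simp add: sum.delta'[OF finite_shsh])
  finally show ?thesis by simp
qed

definition mult2_kernel :: "irel \<times> irel \<Rightarrow> irel \<times> irel \<Rightarrow> irel \<times> irel \<Rightarrow> 'k::comm_semiring_1" where
  "mult2_kernel x x' = (\<lambda>(U, V). mult_basis (fst x) (fst x') U * mult_basis (snd x) (snd x') V)"

lemma mult2_eq_lin: "mult2 t t' = lin (\<lambda>x. lin (mult2_kernel x) t') t"
  unfolding mult2_def mult2_kernel_def by (simp add: split_def)

lemma cop_mult_basis:
  assumes "R \<in> irels" "S \<in> irels"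
  shows "lin cop_basis (mult_basis R S)
    = (lin (\<lambda>x. lin (mult2_kernel x) (cop_basis S)) (cop_basis R) :: _ \<Rightarrow> 'k::comm_semiring_1)"
proof
  fix z :: "irel \<times> irel"
  obtain U V where z: "z = (U, V)" by (cases z)
  have "lin cop_basis (mult_basis R S) z = (\<Sum>T\<in>shsh R S. \<Sum>c\<in>cuts T. bas (cut_parts T c) z :: 'k)"
    by (simp add: lin_mult_basis cop_basis_eq_sum)
  also have "\<dots> = (\<Sum>c\<in>cuts R. \<Sum>d\<in>cuts S. \<Sum>T1\<in>shsh (std_restr R (fst c)) (std_restr S (fst d)).
         \<Sum>T2\<in>shsh (std_restr R (snd c)) (std_restr S (snd d)). bas (T1, T2) z)"
    by (rule sum_shsh_cuts[OF assms])
  also have "\<dots> = (\<Sum>c\<in>cuts R. \<Sum>d\<in>cuts S. mult2_kernel (cut_parts R c) (cut_parts S d) z)"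
    unfolding mult2_kernel_def cut_parts_def z by (simp add: mult_basis_times_mult_basis)
  also have "\<dots> = lin (\<lambda>x. lin (mult2_kernel x) (cop_basis S)) (cop_basis R) z"
    unfolding lin_cop_basis ..
  finally show "lin cop_basis (mult_basis R S) z = (lin (\<lambda>x. lin (mult2_kernel x) (cop_basis S)) (cop_basis R) z :: 'k)" .
qed

lemma cop_mult:
  fixes a b :: "irel \<Rightarrow> 'k::comm_semiring_1"
  assumes a: "a \<in> fs_on irels" and b: "b \<in> fs_on irels"
  shows "cop (mult a b) = mult2 (cop a) (cop b)"
proof -
  note fa = fs_on_finite[OF a] and fb = fs_on_finite[OF b]
  have "cop (mult a b) = lin (\<lambda>R. lin (\<lambda>S. lin cop_basis (mult_basis R S)) b) a"
    unfolding cop_def mult_def lin_lin[OF fa finite_fsupp_lin_mult_basis[OF fb]] lin_lin[OF fb finite_fsupp_mult_basis] ..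
  also have "\<dots> = lin (\<lambda>R. lin (\<lambda>S. lin (\<lambda>x. lin (mult2_kernel x) (cop_basis S)) (cop_basis R)) b) a"
    using fs_on_subset[OF a] fs_on_subset[OF b]
    by (intro lin_cong) (simp add: cop_mult_basis)
  also have "\<dots> = lin (\<lambda>R. lin (\<lambda>x. lin (\<lambda>S. lin (mult2_kernel x) (cop_basis S)) b) (cop_basis R)) a"
    by (intro lin_cong) (rule lin_commute[symmetric])
  also have "\<dots> = lin (\<lambda>x. lin (mult2_kernel x) (cop b)) (cop a)"
    unfolding cop_def lin_lin[OF fa finite_fsupp_cop_basis] lin_lin[OF fb finite_fsupp_cop_basis] ..
  also have "\<dots> = mult2 (cop a) (cop b)"
    unfolding mult2_eq_lin ..
  finally show ?thesis .
qed

theorem proposition15: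
  fixes dummy :: "'k::field"
  defines "V \<equiv> (fs_on irels :: (irel \<Rightarrow> 'k) set)"
  shows
    "(\<forall>a\<in>V. \<forall>b\<in>V. mult a b \<in> V)
   \<and> (\<forall>a\<in>V. (cop a :: irel \<times> irel \<Rightarrow> 'k) \<in> fs_on (irels \<times> irels))
   \<and> bas empty_irel \<in> V
   \<and> (\<forall>a\<in>V. \<forall>b\<in>V. \<forall>c\<in>V. mult (mult a b) c = mult a (mult b c))
   \<and> (\<forall>a\<in>V. mult (bas empty_irel) a = a \<and> mult a (bas empty_irel) = a)
   \<and> (\<forall>a\<in>V. cop_l (cop a) = cop_r (cop a))
   \<and> (\<forall>a\<in>V. \<forall>b\<in>V. cop (mult a b) = mult2 (cop a) (cop b))
   \<and> cop (bas empty_irel) = bas (empty_irel, empty_irel)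
   \<and> (\<forall>R\<in>irels. \<forall>S\<in>irels. \<forall>T. (mult (bas R) (bas S) T :: 'k) \<noteq> 0 \<longrightarrow> fst T = fst R + fst S)
   \<and> (\<forall>R\<in>irels. \<forall>U W. (cop (bas R) (U, W) :: 'k) \<noteq> 0 \<longrightarrow> fst U + fst W = fst R)
   \<and> (\<exists>c :: irel \<Rightarrow> 'k. \<exists>s :: irel \<Rightarrow> irel \<Rightarrow> 'k.
        let eps = (\<lambda>a :: irel \<Rightarrow> 'k. \<Sum>x\<in>fsupp a. a x * c x) in
          (\<forall>R\<in>irels. c R \<noteq> 0 \<longrightarrow> fst R = 0)
        \<and> (\<forall>a\<in>V. lin (\<lambda>(P, Q) W. c P * bas Q W) (cop a) = a
                 \<and> lin (\<lambda>(P, Q) U. bas P U * c Q) (cop a) = a)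
        \<and> (\<forall>a\<in>V. \<forall>b\<in>V. eps (mult a b) = eps a * eps b)
        \<and> eps (bas empty_irel) = 1
        \<and> (\<forall>R\<in>irels. s R \<in> V)
        \<and> (\<forall>a\<in>V. lin (\<lambda>(P, Q). mult (s P) (bas Q)) (cop a) = (\<lambda>T. eps a * bas empty_irel T)
                 \<and> lin (\<lambda>(P, Q). mult (bas P) (s Q)) (cop a) = (\<lambda>T. eps a * bas empty_irel T)))"
  unfolding V_def
proof (intro conjI ballI allI impI counit_antipode_exist)
  fix a b c :: "irel \<Rightarrow> 'k" assume "a \<in> fs_on irels" "b \<in> fs_on irels" "c \<in> fs_on irels"
  then show "mult (mult a b) c = mult a (mult b c)"
    by (intro mult_assoc fs_on_finite)
qed (simp_all add: mult_in_fs_on cop_in_fs_on bas_in_fs_on empty_irel_in_irels mult_unit_left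
    mult_unit_right coassoc fs_on_finite cop_mult cop_bas cop_basis_empty_irel grading_mult grading_cop)

end
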